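(* Let $k$ be an algebraically closed field and let $\pi:(R,J)\to(Q,I)$ be a universal cover of the quiver with relations $(Q,I)$, where all quivers are connected. Then the fundamental group $\Pi(R,J)$ is trivial.
   Context: Quivers with relations $(Q,I)$: $Q$ a quiver, $I$ an ideal of the path category $kQ$ contained in the ideal generated by arrows. A relation $\rho=\sum_{i=1}^n\lambda_iu_i\in I(x,y)$ ($\lambda_i\in k^*$, $u_i$ distinct paths from $x$ to $y$) is minimal if $n\ge2$ and no sum over a nonempty proper subset of the indices lies in $I$; a zero relation if $n=1$. A covering of quivers $f:Q\to Q'$ is a quiver morphism inducing, for each vertex $x$, bijections between arrows starting (resp. ending) at $x$ and arrows starting (resp. ending) at $f(x)$. A covering of quivers with relations $f:(Q,I)\to(Q',I')$ is a covering of quivers such that $kf$ maps $I$ onto $I'$, and for every minimal or zero relation $\rho'\in I'(a',b')$ and every $a\in f^{-1}(a')$ (resp. $b\in f^{-1}(b')$) there exist $b\in f^{-1}(b')$ (resp. $a\in f^{-1}(a')$) and $\rho\in I(a,b)$ with $(kf)(\rho)=\rho'$. A walk is a composable sequence of arrows and formal inverses of arrows. Let $\sim_I$ be the equivalence relation on walks generated by: $\alpha^{-1}\alpha\sim_I 1_{s(\alpha)}$, $\alpha\alpha^{-1}\sim_I1_{t(\alpha)}$ for arrows $\alpha$; $p_1\sim_I p_2$ whenever $\sum_i\lambda_ip_i$ is a minimal relation of $I$; and $w_1\sim_I w_2\Rightarrow uw_1v\sim_I uw_2v$. The fundamental group $\Pi(Q,I)$ is the group (under concatenation) of $\sim_I$-classes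 of closed walks at a fixed vertex. A universal cover of $(Q,I)$ is a covering $\pi:(\widetilde Q,\widetilde I)\to(Q,I)$ such that for every covering $f:(\overline Q,\overline I)\to(Q,I)$ and every $\widetilde x\in\widetilde Q_0$, $\overline x\in\overline Q_0$ with $\pi\widetilde x=f\overline x$, there is a unique covering $\pi':(\widetilde Q,\widetilde I)\to(\overline Q,\overline I)$ with $f\pi'=\pi$ and $\pi'(\widetilde x)=\overline x$. *)

theory Defs
  imports "HOL-Algebra.Group" "HOL-Computational_Algebra.Polynomial"
begin

definition alg_closed :: "'k::field itself \<Rightarrow> bool" where
  "alg_closed _ \<longleftrightarrow> (\<forall>p :: 'k poly. degree p \<ge> 1 \<longrightarrow> (\<exists>z. poly p z = 0))"

record ('v, 'a) quiver =
  verts :: "'v set"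
  arrs  :: "'a set"
  src   :: "'a \<Rightarrow> 'v"
  tgt   :: "'a \<Rightarrow> 'v"

definition wf_quiver :: "('v, 'a) quiver \<Rightarrow> bool" where
  "wf_quiver Q \<longleftrightarrow> (\<forall>\<alpha>\<in>arrs Q. src Q \<alpha> \<in> verts Q \<and> tgt Q \<alpha> \<in> verts Q)"

text \<open>Paths are lists of arrows, read left to right: the target of each arrow is
  the source of the next one. The empty list from x to x is the trivial path at x.\<close>

fun is_path :: "('v, 'a) quiver \<Rightarrow> 'v \<Rightarrow> 'a list \<Rightarrow> 'v \<Rightarrow> bool" where
  "is_path Q x [] y \<longleftrightarrow> x \<in> verts Q \<and> y = x"
| "is_path Q x (\<alpha> # p) y \<longleftrightarrow> x \<in> verts Q \<and> \<alpha> \<in> arrs Q \<and> src Q \<alpha> = x \<and> is_path Q (tgt Q \<alpha>) p y"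

text \<open>A morphism of kQ(x,y) is a finite k-linear combination of paths from x to y,
  represented by its (finitely supported) coefficient function.\<close>

definition supp :: "('a list \<Rightarrow> 'k::zero) \<Rightarrow> 'a list set" where
  "supp f = {p. f p \<noteq> 0}"

definition kQ :: "('v, 'a) quiver \<Rightarrow> 'v \<Rightarrow> 'v \<Rightarrow> ('a list \<Rightarrow> 'k::field) set" where
  "kQ Q x y = {f. finite (supp f) \<and> (\<forall>p\<in>supp f. is_path Q x p y)}"

definition rmul :: "('a list \<Rightarrow> 'k::field) \<Rightarrow> 'a list \<Rightarrow> ('a list \<Rightarrow> 'k)" where
  "rmul f q = (\<lambda>u. if (\<exists>v. u = v @ q) then f (take (length u - length q) u) else 0)"

definition lmul :: "'a list \<Rightarrow> ('a list \<Rightarrow> 'k::field) \<Rightarrow> ('a list \<Rightarrow> 'k)" where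
  "lmul q f = (\<lambda>u. if (\<exists>v. u = q @ v) then f (drop (length q) u) else 0)"

text \<open>An ideal of kQ contained in the ideal generated by the arrows.\<close>

definition quiver_ideal :: "('v, 'a) quiver \<Rightarrow> ('v \<Rightarrow> 'v \<Rightarrow> ('a list \<Rightarrow> 'k::field) set) \<Rightarrow> bool" where
  "quiver_ideal Q I \<longleftrightarrow>
     (\<forall>x y. I x y \<subseteq> kQ Q x y) \<and>
     (\<forall>x y. (\<lambda>_. 0) \<in> I x y) \<and>
     (\<forall>x y f g. f \<in> I x y \<longrightarrow> g \<in> I x y \<longrightarrow> (\<lambda>u. f u + g u) \<in> I x y) \<and>
     (\<forall>x y c f. f \<in> I x y \<longrightarrow> (\<lambda>u. c * f u) \<in> I x y) \<and>
     (\<forall>x y z f q. f \<in> I x y \<longrightarrow> is_path Q y q z \<longrightarrow> rmul f q \<in> I x z) \<and>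
     (\<forall>w x y f q. f \<in> I x y \<longrightarrow> is_path Q w q x \<longrightarrow> lmul q f \<in> I w y) \<and>
     (\<forall>x f. f \<in> I x x \<longrightarrow> f [] = 0)"

definition restrict_to :: "('a list \<Rightarrow> 'k::zero) \<Rightarrow> 'a list set \<Rightarrow> ('a list \<Rightarrow> 'k)" where
  "restrict_to f S = (\<lambda>p. if p \<in> S then f p else 0)"

definition minimal_rel ::
  "('v, 'a) quiver \<Rightarrow> ('v \<Rightarrow> 'v \<Rightarrow> ('a list \<Rightarrow> 'k::field) set) \<Rightarrow> 'v \<Rightarrow> 'v \<Rightarrow> ('a list \<Rightarrow> 'k) \<Rightarrow> bool" where
  "minimal_rel Q I x y \<rho> \<longleftrightarrow> \<rho> \<in> I x y \<and> card (supp \<rho>) \<ge> 2 \<and>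
     (\<forall>S. S \<subseteq> supp \<rho> \<longrightarrow> S \<noteq> {} \<longrightarrow> S \<noteq> supp \<rho> \<longrightarrow> restrict_to \<rho> S \<notin> I x y)"

definition zero_rel ::
  "('v, 'a) quiver \<Rightarrow> ('v \<Rightarrow> 'v \<Rightarrow> ('a list \<Rightarrow> 'k::field) set) \<Rightarrow> 'v \<Rightarrow> 'v \<Rightarrow> ('a list \<Rightarrow> 'k) \<Rightarrow> bool" where
  "zero_rel Q I x y \<rho> \<longleftrightarrow> \<rho> \<in> I x y \<and> card (supp \<rho>) = 1"

definition covering_quiver ::
  "('v, 'a) quiver \<Rightarrow> ('w, 'b) quiver \<Rightarrow> ('v \<Rightarrow> 'w) \<Rightarrow> ('a \<Rightarrow> 'b) \<Rightarrow> bool" where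
  "covering_quiver Q Q' fv fa \<longleftrightarrow>
     (\<forall>x\<in>verts Q. fv x \<in> verts Q') \<and>
     (\<forall>\<alpha>\<in>arrs Q. fa \<alpha> \<in> arrs Q' \<and> src Q' (fa \<alpha>) = fv (src Q \<alpha>) \<and> tgt Q' (fa \<alpha>) = fv (tgt Q \<alpha>)) \<and>
     (\<forall>x\<in>verts Q.
        bij_betw fa {\<alpha>\<in>arrs Q. src Q \<alpha> = x} {\<beta>\<in>arrs Q'. src Q' \<beta> = fv x} \<and>
        bij_betw fa {\<alpha>\<in>arrs Q. tgt Q \<alpha> = x} {\<beta>\<in>arrs Q'. tgt Q' \<beta> = fv x})"

definition kmap :: "('a \<Rightarrow> 'b) \<Rightarrow> ('a list \<Rightarrow> 'k::field) \<Rightarrow> ('b list \<Rightarrow> 'k)" where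
  "kmap fa f = (\<lambda>u'. \<Sum>u\<in>{u\<in>supp f. map fa u = u'}. f u)"

inductive_set fsums :: "('a list \<Rightarrow> 'k::field) set \<Rightarrow> ('a list \<Rightarrow> 'k) set" for S where
  zero: "(\<lambda>_. 0) \<in> fsums S"
| add: "f \<in> S \<Longrightarrow> g \<in> fsums S \<Longrightarrow> (\<lambda>u. f u + g u) \<in> fsums S"

definition covering_rel ::
  "('v, 'a) quiver \<Rightarrow> ('v \<Rightarrow> 'v \<Rightarrow> ('a list \<Rightarrow> 'k::field) set) \<Rightarrow>
   ('w, 'b) quiver \<Rightarrow> ('w \<Rightarrow> 'w \<Rightarrow> ('b list \<Rightarrow> 'k) set) \<Rightarrow>
   ('v \<Rightarrow> 'w) \<Rightarrow> ('a \<Rightarrow> 'b) \<Rightarrow> bool" where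
  "covering_rel Q I Q' I' fv fa \<longleftrightarrow>
     covering_quiver Q Q' fv fa \<and>
     (\<forall>a' b'. I' a' b' =
        fsums (\<Union>{kmap fa ` I x y | x y. x \<in> verts Q \<and> y \<in> verts Q \<and> fv x = a' \<and> fv y = b'})) \<and>
     (\<forall>a' b' \<rho>'. minimal_rel Q' I' a' b' \<rho>' \<or> zero_rel Q' I' a' b' \<rho>' \<longrightarrow>
        (\<forall>a\<in>verts Q. fv a = a' \<longrightarrow> (\<exists>b\<in>verts Q. fv b = b' \<and> (\<exists>\<rho>\<in>I a b. kmap fa \<rho> = \<rho>'))) \<and>
        (\<forall>b\<in>verts Q. fv b = b' \<longrightarrow> (\<exists>a\<in>verts Q. fv a = a' \<and> (\<exists>\<rho>\<in>I a b. kmap fa \<rho> = \<rho>'))))"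

text \<open>A walk is a list of arrows (flag True) and formal inverses (flag False).\<close>

fun is_walk :: "('v, 'a) quiver \<Rightarrow> 'v \<Rightarrow> ('a \<times> bool) list \<Rightarrow> 'v \<Rightarrow> bool" where
  "is_walk Q x [] y \<longleftrightarrow> x \<in> verts Q \<and> y = x"
| "is_walk Q x ((\<alpha>, d) # w) y \<longleftrightarrow> x \<in> verts Q \<and> \<alpha> \<in> arrs Q \<and>
     (if d then src Q \<alpha> = x \<and> is_walk Q (tgt Q \<alpha>) w y
           else tgt Q \<alpha> = x \<and> is_walk Q (src Q \<alpha>) w y)"

definition connected_quiver :: "('v, 'a) quiver \<Rightarrow> bool" where
  "connected_quiver Q \<longleftrightarrow> verts Q \<noteq> {} \<and> (\<forall>x\<in>verts Q. \<forall>y\<in>verts Q. \<exists>w. is_walk Q x w y)"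

definition basic_homot ::
  "('v, 'a) quiver \<Rightarrow> ('v \<Rightarrow> 'v \<Rightarrow> ('a list \<Rightarrow> 'k::field) set) \<Rightarrow>
   'v \<Rightarrow> ('a \<times> bool) list \<Rightarrow> ('a \<times> bool) list \<Rightarrow> 'v \<Rightarrow> bool" where
  "basic_homot Q I y w w' z \<longleftrightarrow>
     (\<exists>\<alpha>\<in>arrs Q. y = src Q \<alpha> \<and> z = y \<and> w = [(\<alpha>, True), (\<alpha>, False)] \<and> w' = []) \<or>
     (\<exists>\<alpha>\<in>arrs Q. y = tgt Q \<alpha> \<and> z = y \<and> w = [(\<alpha>, False), (\<alpha>, True)] \<and> w' = []) \<or>
     (\<exists>\<rho> p1 p2. minimal_rel Q I y z \<rho> \<and> p1 \<in> supp \<rho> \<and> p2 \<in> supp \<rho> \<and>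
        w = map (\<lambda>a. (a, True)) p1 \<and> w' = map (\<lambda>a. (a, True)) p2)"

definition homot_step ::
  "('v, 'a) quiver \<Rightarrow> ('v \<Rightarrow> 'v \<Rightarrow> ('a list \<Rightarrow> 'k::field) set) \<Rightarrow>
   'v \<Rightarrow> ('a \<times> bool) list \<Rightarrow> ('a \<times> bool) list \<Rightarrow> bool" where
  "homot_step Q I x w1 w2 \<longleftrightarrow>
     (\<exists>u v w w' y z e. is_walk Q x u y \<and> basic_homot Q I y w w' z \<and> is_walk Q z v e \<and>
        w1 = u @ w @ v \<and> w2 = u @ w' @ v)"

definition homotopic ::
  "('v, 'a) quiver \<Rightarrow> ('v \<Rightarrow> 'v \<Rightarrow> ('a list \<Rightarrow> 'k::field) set) \<Rightarrow>
   'v \<Rightarrow> ('a \<times> bool) list \<Rightarrow> ('a \<times> bool) list \<Rightarrow> bool" where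
  "homotopic Q I x = (sup (homot_step Q I x) (homot_step Q I x)\<inverse>\<inverse>)\<^sup>*\<^sup>*"

definition homot_class ::
  "('v, 'a) quiver \<Rightarrow> ('v \<Rightarrow> 'v \<Rightarrow> ('a list \<Rightarrow> 'k::field) set) \<Rightarrow>
   'v \<Rightarrow> ('a \<times> bool) list \<Rightarrow> ('a \<times> bool) list set" where
  "homot_class Q I x w = {w'. is_walk Q x w' x \<and> homotopic Q I x w w'}"

definition fundamental_group ::
  "('v, 'a) quiver \<Rightarrow> ('v \<Rightarrow> 'v \<Rightarrow> ('a list \<Rightarrow> 'k::field) set) \<Rightarrow>
   'v \<Rightarrow> ('a \<times> bool) list set monoid" where
  "fundamental_group Q I x =
     \<lparr>carrier = {homot_class Q I x w | w. is_walk Q x w x},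
      monoid.mult = (\<lambda>A B. homot_class Q I x ((SOME a. a \<in> A) @ (SOME b. b \<in> B))),
      monoid.one = homot_class Q I x []\<rparr>"

text \<open>HOL cannot quantify over types inside a formula, so the universal property is
  required for all coverings whose quiver lives in a fixed, sufficiently large universe:
  vertices are walks of Q (every vertex of a connected covering is reached by the
  lift of a walk of Q) and arrows are pairs (source vertex, image arrow).\<close>

definition universal_cover ::
  "('rv, 'ra) quiver \<Rightarrow> ('rv \<Rightarrow> 'rv \<Rightarrow> ('ra list \<Rightarrow> 'k::field) set) \<Rightarrow>
   ('qv, 'qa) quiver \<Rightarrow> ('qv \<Rightarrow> 'qv \<Rightarrow> ('qa list \<Rightarrow> 'k) set) \<Rightarrow>
   ('rv \<Rightarrow> 'qv) \<Rightarrow> ('ra \<Rightarrow> 'qa) \<Rightarrow> bool" where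
  "universal_cover R J Q I \<pi>v \<pi>a \<longleftrightarrow>
     covering_rel R J Q I \<pi>v \<pi>a \<and>
     (\<forall>(Qb :: (('qa \<times> bool) list, ('qa \<times> bool) list \<times> 'qa) quiver) Ib fv fa xt xb.
        wf_quiver Qb \<and> quiver_ideal Qb Ib \<and> connected_quiver Qb \<and>
        covering_rel Qb Ib Q I fv fa \<and>
        xt \<in> verts R \<and> xb \<in> verts Qb \<and> \<pi>v xt = fv xb \<longrightarrow>
        (\<exists>gv ga. covering_rel R J Qb Ib gv ga \<and>
           (\<forall>x\<in>verts R. fv (gv x) = \<pi>v x) \<and> (\<forall>\<alpha>\<in>arrs R. fa (ga \<alpha>) = \<pi>a \<alpha>) \<and> gv xt = xb \<and>
           (\<forall>hv ha. covering_rel R J Qb Ib hv ha \<and>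
              (\<forall>x\<in>verts R. fv (hv x) = \<pi>v x) \<and> (\<forall>\<alpha>\<in>arrs R. fa (ha \<alpha>) = \<pi>a \<alpha>) \<and> hv xt = xb \<longrightarrow>
              (\<forall>x\<in>verts R. hv x = gv x) \<and> (\<forall>\<alpha>\<in>arrs R. ha \<alpha> = ga \<alpha>))))"

end

theory Submission
  imports Defs
begin

text \<open>The homotopy classes of walks starting at a vertex \<open>b\<close> of \<open>Q\<close> are the vertices of a
  connected covering of \<open>(Q, I)\<close>: from the class of \<open>v\<close> there is one arrow for each arrow of \<open>Q\<close>
  leaving the end of \<open>v\<close>, and a combination of paths lies in its ideal iff its image lies in \<open>I\<close>.
  This is a covering of quivers with relations because a minimal relation only involves
  homotopic paths, so \<open>I\<close> decomposes along homotopy classes.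
  By universality, \<open>R\<close> maps to this cover with \<open>x0\<close> going to the class of the trivial walk.
  A closed walk at \<open>x0\<close> thus becomes a closed walk of the cover, i.e. its image in \<open>Q\<close> is homotopic
  to the trivial walk; homotopies lift along coverings, so the walk itself is null-homotopic.\<close>

fun walk_end :: "('v, 'a) quiver \<Rightarrow> 'v \<Rightarrow> ('a \<times> bool) list \<Rightarrow> 'v" where
  "walk_end G x [] = x"
| "walk_end G x ((\<alpha>, d) # w) = walk_end G (if d then tgt G \<alpha> else src G \<alpha>) w"

lemma is_walk_walk_end: "is_walk G x w y \<Longrightarrow> y = walk_end G x w"
  by (induction G x w y rule: is_walk.induct) (auto split: if_splits)

lemma is_walk_verts: "is_walk G x w y \<Longrightarrow> x \<in> verts G \<and> y \<in> verts G"
  by (induction G x w y rule: is_walk.induct) (auto split: if_splits)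

lemma is_walk_arrs: "is_walk G x w y \<Longrightarrow> (\<alpha>, d) \<in> set w \<Longrightarrow> \<alpha> \<in> arrs G"
  by (induction G x w y rule: is_walk.induct) (auto split: if_splits)

lemma is_walk_append: "is_walk G x (u @ v) z \<longleftrightarrow> (\<exists>y. is_walk G x u y \<and> is_walk G y v z)"
  by (induction G x u z rule: is_walk.induct) (auto simp: is_walk_verts)

lemma is_walk_appendI: "is_walk G x u y \<Longrightarrow> is_walk G y v z \<Longrightarrow> is_walk G x (u @ v) z"
  by (auto simp: is_walk_append)

lemma is_walk_append_after:
  "is_walk G x u y \<Longrightarrow> is_walk G x (u @ v) z \<longleftrightarrow> is_walk G y v z"
  by (metis is_walk_append is_walk_walk_end is_walk_verts)

abbreviation fwd_walk :: "'a list \<Rightarrow> ('a \<times> bool) list" where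
  "fwd_walk p \<equiv> map (\<lambda>\<alpha>. (\<alpha>, True)) p"

abbreviation map_walk :: "('a \<Rightarrow> 'b) \<Rightarrow> ('a \<times> bool) list \<Rightarrow> ('b \<times> bool) list" where
  "map_walk f w \<equiv> map (\<lambda>(\<alpha>, d). (f \<alpha>, d)) w"

lemma map_walk_fwd_walk: "map_walk f (fwd_walk p) = fwd_walk (map f p)"
  by (induction p) auto

lemma is_walk_fwd_walk: "is_walk G x (fwd_walk p) y \<longleftrightarrow> is_path G x p y"
  by (induction p arbitrary: x) auto

lemma is_path_verts: "is_path G x p y \<Longrightarrow> x \<in> verts G \<and> y \<in> verts G"
  using is_walk_fwd_walk is_walk_verts by metis

lemma is_path_end_unique: "is_path G x p y \<Longrightarrow> is_path G x p y' \<Longrightarrow> y = y'"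
  using is_walk_fwd_walk is_walk_walk_end by metis

lemma is_path_append: "is_path G x (u @ v) z \<longleftrightarrow> (\<exists>y. is_path G x u y \<and> is_path G y v z)"
  by (induction u arbitrary: x) (auto simp: is_path_verts)

lemma map_walk_eq_fwd_walkD:
  "map_walk f w = fwd_walk p \<Longrightarrow> w = fwd_walk (map fst w) \<and> map f (map fst w) = p"
  by (induction w arbitrary: p) (auto simp: map_eq_Cons_conv)

lemma map_walk_eq_append3:
  assumes "map_walk f w = u @ s @ t"
  obtains wu ws wt where "w = wu @ ws @ wt" "map_walk f wu = u" "map_walk f ws = s" "map_walk f wt = t"
proof -
  obtain wu w' where 1: "w = wu @ w'" "u = map_walk f wu" "s @ t = map_walk f w'"
    using assms[unfolded map_eq_append_conv] by blast
  obtain ws wt where "w' = ws @ wt" "s = map_walk f ws" "t = map_walk f wt"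
    using 1(3)[symmetric, unfolded map_eq_append_conv] by blast
  with 1 show thesis by (intro that[of wu ws wt]) simp_all
qed

fun rev_walk :: "('a \<times> bool) list \<Rightarrow> ('a \<times> bool) list" where
  "rev_walk [] = []"
| "rev_walk ((\<alpha>, d) # w) = rev_walk w @ [(\<alpha>, \<not> d)]"

lemma is_walk_rev_walk: "wf_quiver G \<Longrightarrow> is_walk G x w y \<Longrightarrow> is_walk G y (rev_walk w) x"
  by (induction G x w y rule: is_walk.induct)
     (auto simp: wf_quiver_def is_walk_append split: if_splits)

section \<open>Homotopy of walks\<close>

lemma homotopic_eq_equivclp: "homotopic G I x = equivclp (homot_step G I x)"
  by (simp add: homotopic_def equivclp_def symclp_pointfree)

lemma homotopic_refl [simp]: "homotopic G I x w w"
  by (simp add: homotopic_eq_equivclp)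

lemma homotopic_sym: "homotopic G I x w1 w2 \<Longrightarrow> homotopic G I x w2 w1"
  unfolding homotopic_eq_equivclp by (rule equivclp_sym)

lemma homotopic_trans: "homotopic G I x w1 w2 \<Longrightarrow> homotopic G I x w2 w3 \<Longrightarrow> homotopic G I x w1 w3"
  unfolding homotopic_eq_equivclp by (rule equivclp_trans)

lemma homot_step_homotopic: "homot_step G I x w1 w2 \<Longrightarrow> homotopic G I x w1 w2"
  unfolding homotopic_eq_equivclp by blast

lemma homot_step_prepend:
  assumes "homot_step G I y w1 w2" "is_walk G x u y"
  shows "homot_step G I x (u @ w1) (u @ w2)"
proof -
  obtain u0 v s s' y' z e where "is_walk G y u0 y'" "basic_homot G I y' s s' z" "is_walk G z v e"
     "w1 = u0 @ s @ v" "w2 = u0 @ s' @ v"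
    using assms(1) unfolding homot_step_def by blast
  with assms(2) show ?thesis
    unfolding homot_step_def
    by (intro exI[of _ "u @ u0"] exI[of _ v] exI[of _ s] exI[of _ s']) (auto intro: is_walk_appendI)
qed

lemma homotopic_prepend:
  assumes "homotopic G I y w1 w2" "is_walk G x u y"
  shows "homotopic G I x (u @ w1) (u @ w2)"
  using assms(1) unfolding homotopic_eq_equivclp
  by (induction rule: equivclp_induct)
     (auto intro: equivclp_into_equivclp dest: homot_step_prepend[OF _ assms(2)])

lemma homot_step_cancel:
  assumes "is_walk G x u y" "\<alpha> \<in> arrs G" "(if d then src G \<alpha> else tgt G \<alpha>) = y" "is_walk G y t e"
  shows "homot_step G I x (u @ [(\<alpha>, d), (\<alpha>, \<not> d)] @ t) (u @ t)"
proof -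
  have "basic_homot G I y [(\<alpha>, d), (\<alpha>, \<not> d)] [] y"
    using assms(2,3) unfolding basic_homot_def by (cases d) auto
  then show ?thesis unfolding homot_step_def using assms(1,4) by blast
qed

lemma homotopic_relation:
  assumes "minimal_rel G I y z \<rho>" "p1 \<in> supp \<rho>" "p2 \<in> supp \<rho>" "y \<in> verts G" "z \<in> verts G"
  shows "homotopic G I y (fwd_walk p1) (fwd_walk p2)"
proof -
  have "basic_homot G I y (fwd_walk p1) (fwd_walk p2) z"
    unfolding basic_homot_def using assms by blast
  then have "homot_step G I y ([] @ fwd_walk p1 @ []) ([] @ fwd_walk p2 @ [])"
    unfolding homot_step_def using assms(4,5)
    by (intro exI[of _ "[]"] exI[of _ "[]"] exI[of _ "fwd_walk p1"] exI[of _ "fwd_walk p2"]) auto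
  then show ?thesis by (simp add: homot_step_homotopic)
qed

lemma basic_homot_cases:
  fixes G :: "('v, 'a) quiver" and I :: "'v \<Rightarrow> 'v \<Rightarrow> ('a list \<Rightarrow> 'k::field) set"
  assumes "basic_homot G I y w w' z \<or> basic_homot G I y w' w z"
  obtains (cancel) \<alpha> d where "\<alpha> \<in> arrs G" "(if d then src G \<alpha> else tgt G \<alpha>) = y"
      "w = [(\<alpha>, d), (\<alpha>, \<not> d)]" "w' = []"
    | (cancel_rev) \<alpha> d where "\<alpha> \<in> arrs G" "(if d then src G \<alpha> else tgt G \<alpha>) = y"
      "w' = [(\<alpha>, d), (\<alpha>, \<not> d)]" "w = []"
    | (relation) \<rho> p p' where "minimal_rel G I y z \<rho>" "p \<in> supp \<rho>" "p' \<in> supp \<rho>"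
      "w = fwd_walk p" "w' = fwd_walk p'"
  using assms unfolding basic_homot_def
  by (elim disjE bexE exE conjE)
     (auto intro: cancel[of _ True] cancel[of _ False] cancel_rev[of _ True] cancel_rev[of _ False] relation)

lemma symclp_homot_step_iff:
  "symclp (homot_step G I x) w1 w2 \<longleftrightarrow>
     (\<exists>u v s s' y z e. is_walk G x u y \<and> (basic_homot G I y s s' z \<or> basic_homot G I y s' s z) \<and>
        is_walk G z v e \<and> w1 = u @ s @ v \<and> w2 = u @ s' @ v)"
  unfolding symclp_def homot_step_def by blast

lemma fundamental_group_trivialI:
  assumes "x \<in> verts G" "\<And>w. is_walk G x w x \<Longrightarrow> homotopic G I x w []"
  shows "carrier (fundamental_group G I x) = {\<one>\<^bsub>fundamental_group G I x\<^esub>}"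
proof -
  have "homot_class G I x w = homot_class G I x []" if "is_walk G x w x" for w
  proof -
    have "homotopic G I x w w' \<longleftrightarrow> homotopic G I x [] w'" for w'
      using assms(2)[OF that] homotopic_trans homotopic_sym by meson
    then show ?thesis unfolding homot_class_def by simp
  qed
  moreover have "is_walk G x [] x" using assms(1) by simp
  ultimately have "{homot_class G I x w | w. is_walk G x w x} = {homot_class G I x []}"
    by blast
  then show ?thesis by (simp add: fundamental_group_def)
qed

locale quiver_with_relations =
  fixes Q :: "('v, 'a) quiver" and I :: "'v \<Rightarrow> 'v \<Rightarrow> ('a list \<Rightarrow> 'k::field) set"
  assumes wf: "wf_quiver Q" and ideal: "quiver_ideal Q I"
begin

lemma basic_homot_walks:
  assumes "basic_homot Q I y w w' z" "y \<in> verts Q"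
  shows "is_walk Q y w z \<and> is_walk Q y w' z"
  using assms ideal wf
  by (auto simp: basic_homot_def minimal_rel_def quiver_ideal_def kQ_def wf_quiver_def
      is_walk_fwd_walk subset_iff)

lemma homot_step_walk_iff:
  assumes "homot_step Q I x w1 w2"
  shows "is_walk Q x w1 e \<longleftrightarrow> is_walk Q x w2 e"
proof -
  obtain u v s s' y z e' where u: "is_walk Q x u y" and b: "basic_homot Q I y s s' z"
    and w: "w1 = u @ s @ v" "w2 = u @ s' @ v"
    using assms unfolding homot_step_def by blast
  have "is_walk Q y s z" "is_walk Q y s' z"
    using basic_homot_walks[OF b] is_walk_verts[OF u] by auto
  then show ?thesis
    unfolding w by (simp add: is_walk_append_after[OF u] is_walk_append_after)
qed

lemma homotopic_walk_iff:
  "homotopic Q I x w1 w2 \<Longrightarrow> is_walk Q x w1 e \<longleftrightarrow> is_walk Q x w2 e"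
  unfolding homotopic_eq_equivclp
  by (induction rule: equivclp_induct) (auto dest: homot_step_walk_iff)

lemma homot_step_append:
  assumes "homot_step Q I x w1 w2" "is_walk Q x w1 e" "is_walk Q e t f"
  shows "homot_step Q I x (w1 @ t) (w2 @ t)"
proof -
  obtain u v s s' y z e' where h: "is_walk Q x u y" "basic_homot Q I y s s' z" "is_walk Q z v e'"
     "w1 = u @ s @ v" "w2 = u @ s' @ v"
    using assms(1) unfolding homot_step_def by blast
  have "is_walk Q y s z" using basic_homot_walks[OF h(2)] is_walk_verts[OF h(1)] by blast
  then have "is_walk Q z v e" using assms(2) h(1,4) by (simp add: is_walk_append_after)
  then have "is_walk Q z (v @ t) f" using assms(3) by (rule is_walk_appendI)
  then show ?thesis unfolding homot_step_def using h(1,2,4,5) by fastforce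
qed

lemma homotopic_append:
  assumes "homotopic Q I x w1 w2" "is_walk Q x w1 e" "is_walk Q e t f"
  shows "homotopic Q I x (w1 @ t) (w2 @ t)"
proof -
  have "is_walk Q x w e" if "homotopic Q I x w1 w" for w
    using homotopic_walk_iff[OF that] assms(2) by blast
  with assms(1) show ?thesis unfolding homotopic_eq_equivclp
    by (induction rule: equivclp_induct)
       (auto intro: equivclp_into_equivclp homot_step_append[OF _ _ assms(3)]
         simp: homot_step_walk_iff homotopic_eq_equivclp)
qed

lemma homotopic_cancel_rev_walk:
  assumes "is_walk Q x w e" "is_walk Q a u e"
  shows "homotopic Q I x (w @ rev_walk u @ u) w"
  using assms(2)
proof (induction u arbitrary: a)
  case (Cons \<alpha>d u)
  obtain \<alpha> d where [simp]: "\<alpha>d = (\<alpha>, d)" by fastforce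
  let ?b = "if d then tgt Q \<alpha> else src Q \<alpha>"
  have u: "is_walk Q ?b u e" and \<alpha>: "\<alpha> \<in> arrs Q" "(if \<not> d then src Q \<alpha> else tgt Q \<alpha>) = ?b"
    using Cons.prems by (auto split: if_splits)
  have "is_walk Q x (w @ rev_walk u) ?b"
    using assms(1) is_walk_rev_walk[OF wf u] by (rule is_walk_appendI)
  then have "homot_step Q I x ((w @ rev_walk u) @ [(\<alpha>, \<not> d), (\<alpha>, \<not> \<not> d)] @ u) ((w @ rev_walk u) @ u)"
    using homot_step_cancel[OF _ \<alpha> u] by blast
  then show ?case
    using Cons.IH[OF u] by (auto intro: homotopic_trans homot_step_homotopic)
qed simp

end

lemma supp_zero [simp]: "supp (\<lambda>_. 0) = {}"
  by (simp add: supp_def)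

lemma supp_empty_iff: "supp f = {} \<longleftrightarrow> f = (\<lambda>_. 0)"
  by (auto simp: supp_def)

lemma supp_restrict_to [simp]: "supp (restrict_to f S) = supp f \<inter> S"
  by (auto simp: restrict_to_def supp_def)

lemma restrict_to_supp_subset: "supp f \<subseteq> S \<Longrightarrow> restrict_to f S = f"
  unfolding restrict_to_def supp_def by (rule ext) auto

lemma restrict_to_supp_disjoint: "supp f \<inter> S = {} \<Longrightarrow> restrict_to f S = (\<lambda>_. 0)"
  unfolding restrict_to_def supp_def by (rule ext) auto

lemma kQ_zero: "(\<lambda>_. 0) \<in> kQ G x y"
  by (simp add: kQ_def)

lemma supp_add_subset: "supp (\<lambda>u. (f :: 'a list \<Rightarrow> 'k::field) u + g u) \<subseteq> supp f \<union> supp g"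
  by (auto simp: supp_def)

lemma kQ_add: "f \<in> kQ G x y \<Longrightarrow> g \<in> kQ G x y \<Longrightarrow> (\<lambda>u. f u + g u) \<in> kQ G x y"
  unfolding kQ_def using supp_add_subset[of f g] by (auto intro: finite_subset)

lemma kQ_smult: "f \<in> kQ G x y \<Longrightarrow> (\<lambda>u. c * f u) \<in> kQ G x y"
  unfolding kQ_def supp_def by (auto intro: finite_subset)

lemma rmul_append [simp]: "rmul f q (v @ q) = f v"
  by (simp add: rmul_def)

lemma supp_rmul: "supp (rmul f q) = (\<lambda>v. v @ q) ` supp f"
  by (auto simp: supp_def rmul_def)

lemma lmul_append [simp]: "lmul q f (q @ v) = f v"
  by (simp add: lmul_def)

lemma supp_lmul: "supp (lmul q f) = (\<lambda>v. q @ v) ` supp f"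
  by (auto simp: supp_def lmul_def)

lemma kQ_rmul: "f \<in> kQ G x y \<Longrightarrow> is_path G y q z \<Longrightarrow> rmul f q \<in> kQ G x z"
  by (auto simp: kQ_def supp_rmul is_path_append)

lemma kQ_lmul: "f \<in> kQ G x y \<Longrightarrow> is_path G w q x \<Longrightarrow> lmul q f \<in> kQ G w y"
  by (auto simp: kQ_def supp_lmul is_path_append)

lemma sum_restrict_to_fibres:
  assumes "finite (supp f)"
  shows "(\<lambda>u. \<Sum>y\<in>c ` supp f. restrict_to f {p. c p = y} u) = f"
proof
  fix u
  have "(\<Sum>y\<in>c ` supp f. restrict_to f {p. c p = y} u) = (if c u \<in> c ` supp f then f u else 0)"
    using assms by (simp add: restrict_to_def sum.delta)
  also have "\<dots> = f u" by (auto simp: supp_def)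
  finally show "(\<Sum>y\<in>c ` supp f. restrict_to f {p. c p = y} u) = f u" .
qed

lemma kmap_zero: "kmap fa (\<lambda>_. 0) = (\<lambda>_. 0)"
  by (simp add: kmap_def)

lemma kmap_add:
  assumes "finite (supp f)" "finite (supp g)"
  shows "kmap fa (\<lambda>u. f u + g u) = (\<lambda>u'. kmap fa f u' + kmap fa g u')"
proof
  fix u'
  define T where "T = {u \<in> supp f \<union> supp g. map fa u = u'}"
  have "finite T" unfolding T_def using assms by auto
  then have sum_T: "kmap fa h u' = (\<Sum>u\<in>T. h u)" if "supp h \<subseteq> supp f \<union> supp g" for h
    unfolding kmap_def using that
    by (intro sum.mono_neutral_left) (auto simp: T_def supp_def)
  show "kmap fa (\<lambda>u. f u + g u) u' = kmap fa f u' + kmap fa g u'"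
    using sum_T[of f] sum_T[of g] sum_T[OF supp_add_subset] by (simp add: sum.distrib)
qed

lemma kmap_smult: "kmap fa (\<lambda>u. c * f u) = (\<lambda>u'. c * kmap fa f u')"
proof (cases "c = 0")
  case False
  then have "supp (\<lambda>u. c * f u) = supp f" by (auto simp: supp_def)
  then show ?thesis unfolding kmap_def by (simp add: sum_distrib_left)
qed (simp add: kmap_def)

lemma kmap_rmul: "kmap fa (rmul f q) = rmul (kmap fa f) (map fa q)"
proof
  fix u'
  have "kmap fa (rmul f q) u' = (\<Sum>u\<in>(\<lambda>v. v @ q) ` {v\<in>supp f. map fa (v @ q) = u'}. rmul f q u)"
    unfolding kmap_def supp_rmul by (rule sum.cong) auto
  also have "\<dots> = (\<Sum>v\<in>{v\<in>supp f. map fa (v @ q) = u'}. f v)"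
    by (subst sum.reindex) (auto simp: inj_on_def)
  finally have L: "kmap fa (rmul f q) u' = (\<Sum>v\<in>{v\<in>supp f. map fa (v @ q) = u'}. f v)" .
  show "kmap fa (rmul f q) u' = rmul (kmap fa f) (map fa q) u'"
  proof (cases "\<exists>w. u' = w @ map fa q")
    case True
    then obtain w where w: "u' = w @ map fa q" by blast
    have "{v\<in>supp f. map fa (v @ q) = u'} = {v\<in>supp f. map fa v = w}" using w by auto
    then show ?thesis using L w by (simp add: kmap_def)
  next
    case False
    then have E: "{v\<in>supp f. map fa (v @ q) = u'} = {}" by auto
    have "kmap fa (rmul f q) u' = 0" unfolding L E by simp
    then show ?thesis using False by (simp add: rmul_def)
  qed
qed

lemma kmap_lmul: "kmap fa (lmul q f) = lmul (map fa q) (kmap fa f)"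
proof
  fix u'
  have "kmap fa (lmul q f) u' = (\<Sum>u\<in>(\<lambda>v. q @ v) ` {v\<in>supp f. map fa (q @ v) = u'}. lmul q f u)"
    unfolding kmap_def supp_lmul by (rule sum.cong) auto
  also have "\<dots> = (\<Sum>v\<in>{v\<in>supp f. map fa (q @ v) = u'}. f v)"
    by (subst sum.reindex) (auto simp: inj_on_def)
  finally have L: "kmap fa (lmul q f) u' = (\<Sum>v\<in>{v\<in>supp f. map fa (q @ v) = u'}. f v)" .
  show "kmap fa (lmul q f) u' = lmul (map fa q) (kmap fa f) u'"
  proof (cases "\<exists>w. u' = map fa q @ w")
    case True
    then obtain w where w: "u' = map fa q @ w" by blast
    have "{v\<in>supp f. map fa (q @ v) = u'} = {v\<in>supp f. map fa v = w}" using w by auto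
    then show ?thesis using L w by (simp add: kmap_def)
  next
    case False
    then have E: "{v\<in>supp f. map fa (q @ v) = u'} = {}" by auto
    have "kmap fa (lmul q f) u' = 0" unfolding L E by simp
    then show ?thesis using False by (simp add: lmul_def)
  qed
qed

lemma kmap_Nil: "kmap fa f [] = f []"
proof -
  have "{u \<in> supp f. map fa u = []} = (if f [] = 0 then {} else {[]})"
    by (auto simp: supp_def)
  then show ?thesis unfolding kmap_def by auto
qed

lemma kmap_eq_0:
  assumes "q \<notin> map fa ` supp f"
  shows "kmap fa f q = 0"
proof -
  have empty: "{u \<in> supp f. map fa u = q} = {}" using assms by blast
  show ?thesis unfolding kmap_def empty by simp
qed

lemma supp_kmap_subset: "supp (kmap fa f) \<subseteq> map fa ` supp f"
  using kmap_eq_0[of _ fa f] unfolding supp_def by blast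

lemma kmap_inj_on:
  assumes "inj_on (map fa) (supp f)" "u \<in> supp f"
  shows "kmap fa f (map fa u) = f u"
proof -
  have "{v\<in>supp f. map fa v = map fa u} = {u}" using assms unfolding inj_on_def by blast
  then show ?thesis unfolding kmap_def by simp
qed

lemma supp_kmap_inj_on:
  assumes "inj_on (map fa) (supp f)"
  shows "supp (kmap fa f) = map fa ` supp f"
  using supp_kmap_subset kmap_inj_on[OF assms] by (fastforce simp: supp_def)

lemma kmap_restrict_to_inj_on:
  assumes "inj_on (map fa) (supp f)"
  shows "kmap fa (restrict_to f S) = restrict_to (kmap fa f) (map fa ` (supp f \<inter> S))"
proof
  fix q
  have inj: "inj_on (map fa) (supp (restrict_to f S))"
    using assms by (auto intro: inj_on_subset)
  show "kmap fa (restrict_to f S) q = restrict_to (kmap fa f) (map fa ` (supp f \<inter> S)) q"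
  proof (cases "q \<in> map fa ` (supp f \<inter> S)")
    case True
    then obtain u where u: "u \<in> supp f \<inter> S" "q = map fa u" by blast
    then have "kmap fa (restrict_to f S) q = restrict_to f S u"
      using kmap_inj_on[OF inj] by simp
    then show ?thesis
      using u True kmap_inj_on[OF assms] by (simp add: restrict_to_def)
  qed (simp add: kmap_eq_0 restrict_to_def[of "kmap fa f"])
qed

lemma fsums_single: "f \<in> S \<Longrightarrow> f \<in> fsums S"
  using fsums.add[OF _ fsums.zero, of f S] by simp

lemma fsums_sum:
  assumes "finite Y" "\<And>y. y \<in> Y \<Longrightarrow> g y \<in> S"
  shows "(\<lambda>u. \<Sum>y\<in>Y. g y u) \<in> fsums S"
  using assms by (induction Y rule: finite_induct) (auto intro: fsums.intros)

context quiver_with_relations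
begin

lemma ideal_kQ: "f \<in> I x y \<Longrightarrow> f \<in> kQ Q x y"
  using ideal by (auto simp: quiver_ideal_def)

lemma ideal_finite: "f \<in> I x y \<Longrightarrow> finite (supp f)"
  using ideal_kQ by (simp add: kQ_def)

lemma ideal_path: "f \<in> I x y \<Longrightarrow> p \<in> supp f \<Longrightarrow> is_path Q x p y"
  using ideal_kQ by (simp add: kQ_def)

lemma ideal_zero: "(\<lambda>_. 0) \<in> I x y"
  using ideal by (simp add: quiver_ideal_def)

lemma ideal_add: "f \<in> I x y \<Longrightarrow> g \<in> I x y \<Longrightarrow> (\<lambda>u. f u + g u) \<in> I x y"
  using ideal by (simp add: quiver_ideal_def)

lemma ideal_smult: "f \<in> I x y \<Longrightarrow> (\<lambda>u. c * f u) \<in> I x y"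
  using ideal by (simp add: quiver_ideal_def)

lemma ideal_rmul: "f \<in> I x y \<Longrightarrow> is_path Q y q z \<Longrightarrow> rmul f q \<in> I x z"
  using ideal by (simp add: quiver_ideal_def)

lemma ideal_lmul: "f \<in> I x y \<Longrightarrow> is_path Q w q x \<Longrightarrow> lmul q f \<in> I w y"
  using ideal by (simp add: quiver_ideal_def)

lemma ideal_Nil: "f \<in> I x x \<Longrightarrow> f [] = 0"
  using ideal by (simp add: quiver_ideal_def)

lemma fsums_subset_ideal:
  assumes "S \<subseteq> I x y"
  shows "fsums S \<subseteq> I x y"
proof
  fix f assume "f \<in> fsums S"
  then show "f \<in> I x y"
    by induction (use assms in \<open>auto intro: ideal_zero ideal_add\<close>)
qed

lemma restrict_to_complement_in_ideal:
  assumes "f \<in> I x y" "restrict_to f S \<in> I x y"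
  shows "restrict_to f (- S) \<in> I x y"
proof -
  have "restrict_to f (- S) = (\<lambda>u. f u + (- 1) * restrict_to f S u)"
    by (auto simp: restrict_to_def)
  then show ?thesis by (metis ideal_add[OF assms(1) ideal_smult[OF assms(2)]])
qed

text \<open>An element of \<open>I\<close> that is not a minimal relation splits into two elements of \<open>I\<close> with
  disjoint supports; by induction it is a sum of minimal relations with disjoint supports, none of
  which is cut by \<open>P\<close>.\<close>

lemma restrict_to_in_ideal:
  assumes "f \<in> I x y"
    and "\<And>\<rho>. minimal_rel Q I x y \<rho> \<Longrightarrow> supp \<rho> \<subseteq> supp f \<Longrightarrow> supp \<rho> \<subseteq> P \<or> supp \<rho> \<inter> P = {}"
  shows "restrict_to f P \<in> I x y"
  using assms
proof (induction "card (supp f)" arbitrary: f rule: less_induct)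
  case less
  show ?case
  proof (cases "supp f \<subseteq> P \<or> supp f \<inter> P = {}")
    case True
    then show ?thesis
      using less.prems(1) by (auto simp: restrict_to_supp_subset restrict_to_supp_disjoint ideal_zero)
  next
    case False
    have fin: "finite (supp f)" using less.prems(1) by (rule ideal_finite)
    obtain a b where ab: "a \<in> supp f" "a \<in> P" "b \<in> supp f" "b \<notin> P" using False by blast
    then have "card {a, b} \<le> card (supp f)" by (intro card_mono[OF fin]) auto
    then have "card (supp f) \<ge> 2" using ab(2,4) by (cases "a = b") auto
    moreover have "\<not> minimal_rel Q I x y f" using False less.prems(2) by blast
    ultimately obtain S where S: "S \<subseteq> supp f" "S \<noteq> {}" "S \<noteq> supp f" "restrict_to f S \<in> I x y"
      using less.prems(1) unfolding minimal_rel_def by blast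
    have restrict_part: "restrict_to (restrict_to f T) P \<in> I x y"
      if "restrict_to f T \<in> I x y" "supp f \<inter> T \<subset> supp f" for T
    proof (rule less.hyps)
      show "card (supp (restrict_to f T)) < card (supp f)"
        using psubset_card_mono[OF fin that(2)] by simp
    qed (use that less.prems(2) in auto)
    have "supp f \<inter> S \<subset> supp f" "supp f \<inter> - S \<subset> supp f" using S(1-3) by auto
    then have "restrict_to (restrict_to f S) P \<in> I x y" "restrict_to (restrict_to f (- S)) P \<in> I x y"
      using restrict_part S(4) restrict_to_complement_in_ideal[OF less.prems(1) S(4)] by auto
    moreover have "restrict_to f P =
        (\<lambda>u. restrict_to (restrict_to f S) P u + restrict_to (restrict_to f (- S)) P u)"
      by (auto simp: restrict_to_def)
    ultimately show ?thesis by (simp add: ideal_add)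
  qed
qed

end

locale quiver_covering =
  fixes G :: "('v, 'a) quiver" and H :: "('w, 'b) quiver" and fv :: "'v \<Rightarrow> 'w" and fa :: "'a \<Rightarrow> 'b"
  assumes covering: "covering_quiver G H fv fa"
begin

lemma vert_image: "x \<in> verts G \<Longrightarrow> fv x \<in> verts H"
  using covering by (simp add: covering_quiver_def)

lemma arr_image:
  "\<alpha> \<in> arrs G \<Longrightarrow> fa \<alpha> \<in> arrs H \<and> src H (fa \<alpha>) = fv (src G \<alpha>) \<and> tgt H (fa \<alpha>) = fv (tgt G \<alpha>)"
  using covering by (simp add: covering_quiver_def)

lemma out_arrs_bij: "x \<in> verts G \<Longrightarrow> bij_betw fa {\<alpha>\<in>arrs G. src G \<alpha> = x} {\<beta>\<in>arrs H. src H \<beta> = fv x}"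
  using covering by (simp add: covering_quiver_def)

lemma in_arrs_bij: "x \<in> verts G \<Longrightarrow> bij_betw fa {\<alpha>\<in>arrs G. tgt G \<alpha> = x} {\<beta>\<in>arrs H. tgt H \<beta> = fv x}"
  using covering by (simp add: covering_quiver_def)

lemma out_arr_inj:
  "\<lbrakk>x \<in> verts G; \<alpha> \<in> arrs G; \<beta> \<in> arrs G; src G \<alpha> = x; src G \<beta> = x; fa \<alpha> = fa \<beta>\<rbrakk> \<Longrightarrow> \<alpha> = \<beta>"
  using bij_betw_imp_inj_on[OF out_arrs_bij] by (auto simp: inj_on_def)

lemma in_arr_inj:
  "\<lbrakk>x \<in> verts G; \<alpha> \<in> arrs G; \<beta> \<in> arrs G; tgt G \<alpha> = x; tgt G \<beta> = x; fa \<alpha> = fa \<beta>\<rbrakk> \<Longrightarrow> \<alpha> = \<beta>"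
  using bij_betw_imp_inj_on[OF in_arrs_bij] by (auto simp: inj_on_def)

lemma out_arr_lift:
  assumes "x \<in> verts G" "\<beta> \<in> arrs H" "src H \<beta> = fv x"
  obtains \<alpha> where "\<alpha> \<in> arrs G" "src G \<alpha> = x" "fa \<alpha> = \<beta>"
proof -
  have "\<beta> \<in> fa ` {\<alpha>\<in>arrs G. src G \<alpha> = x}"
    using bij_betw_imp_surj_on[OF out_arrs_bij[OF assms(1)]] assms(2,3) by simp
  then show thesis using that by blast
qed

lemma in_arr_lift:
  assumes "x \<in> verts G" "\<beta> \<in> arrs H" "tgt H \<beta> = fv x"
  obtains \<alpha> where "\<alpha> \<in> arrs G" "tgt G \<alpha> = x" "fa \<alpha> = \<beta>"
proof -
  have "\<beta> \<in> fa ` {\<alpha>\<in>arrs G. tgt G \<alpha> = x}"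
    using bij_betw_imp_surj_on[OF in_arrs_bij[OF assms(1)]] assms(2,3) by simp
  then show thesis using that by blast
qed

lemma walk_image: "is_walk G x w y \<Longrightarrow> is_walk H (fv x) (map_walk fa w) (fv y)"
proof (induction w arbitrary: x)
  case (Cons \<alpha>d w)
  then show ?case by (cases \<alpha>d) (auto simp: vert_image arr_image split: if_splits)
qed (simp add: vert_image)

lemma path_image: "is_path G x p y \<Longrightarrow> is_path H (fv x) (map fa p) (fv y)"
  using walk_image[of x "fwd_walk p" y] unfolding map_walk_fwd_walk is_walk_fwd_walk .

lemma walk_image_inj:
  "\<lbrakk>is_walk G x w y; is_walk G x w' y'; map_walk fa w = map_walk fa w'\<rbrakk> \<Longrightarrow> w = w'"
proof (induction w arbitrary: x w')
  case (Cons \<alpha>d w)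
  obtain \<alpha> d where \<alpha>d: "\<alpha>d = (\<alpha>, d)" by fastforce
  obtain \<alpha>' w'' where w': "w' = (\<alpha>', d) # w''" and "fa \<alpha> = fa \<alpha>'"
    and images: "map_walk fa w = map_walk fa w''"
    using Cons.prems(3) \<alpha>d by (cases w') auto
  have walks: "is_walk G x ((\<alpha>, d) # w) y" "is_walk G x ((\<alpha>', d) # w'') y'"
    using Cons.prems(1,2) \<alpha>d w' by simp_all
  then have "\<alpha> = \<alpha>'"
    using \<open>fa \<alpha> = fa \<alpha>'\<close> out_arr_inj[of x \<alpha> \<alpha>'] in_arr_inj[of x \<alpha> \<alpha>']
    by (cases d) simp_all
  with walks have "w = w''"
    using Cons.IH[OF _ _ images] by (cases d) auto
  then show ?case using \<alpha>d w' \<open>\<alpha> = \<alpha>'\<close> by simp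
qed simp

lemma path_image_inj:
  assumes "is_path G x p y" "is_path G x p' y'" "map fa p = map fa p'"
  shows "p = p' \<and> y = y'"
proof -
  have "is_walk G x (fwd_walk p) y" "is_walk G x (fwd_walk p') y'"
    using assms(1,2) by (simp_all only: is_walk_fwd_walk)
  moreover have "map_walk fa (fwd_walk p) = map_walk fa (fwd_walk p')"
    unfolding map_walk_fwd_walk assms(3) ..
  ultimately have "fwd_walk p = fwd_walk p'" by (rule walk_image_inj)
  then have "map fst (fwd_walk p) = map fst (fwd_walk p')" by (rule arg_cong)
  then have "p = p'" by (simp add: comp_def)
  then show ?thesis using is_path_end_unique[OF assms(1)] assms(2) by simp
qed

end

section \<open>Lifting homotopies along a covering\<close>

locale relations_covering = quiver_with_relations G J
  for G :: "('v, 'a) quiver" and J :: "'v \<Rightarrow> 'v \<Rightarrow> ('a list \<Rightarrow> 'k::field) set" +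
  fixes H :: "('w, 'b) quiver" and I :: "'w \<Rightarrow> 'w \<Rightarrow> ('b list \<Rightarrow> 'k) set"
    and fv :: "'v \<Rightarrow> 'w" and fa :: "'a \<Rightarrow> 'b"
  assumes covering_rel: "covering_rel G J H I fv fa"
begin

sublocale quiver_covering G H fv fa
  using covering_rel by unfold_locales (simp add: covering_rel_def)

lemma kmap_in_ideal:
  assumes "x \<in> verts G" "y \<in> verts G" "\<rho> \<in> J x y"
  shows "kmap fa \<rho> \<in> I (fv x) (fv y)"
proof -
  have "I (fv x) (fv y) = fsums (\<Union>{kmap fa ` J x' y' | x' y'.
      x' \<in> verts G \<and> y' \<in> verts G \<and> fv x' = fv x \<and> fv y' = fv y})"
    using covering_rel unfolding covering_rel_def by blast
  moreover have "kmap fa \<rho> \<in> \<Union>{kmap fa ` J x' y' | x' y'.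
      x' \<in> verts G \<and> y' \<in> verts G \<and> fv x' = fv x \<and> fv y' = fv y}"
    using assms by blast
  ultimately show ?thesis by (simp add: fsums_single)
qed

lemma kmap_inj_on_ideal: "\<rho> \<in> J y b \<Longrightarrow> inj_on (map fa) (supp \<rho>)"
  by (auto intro!: inj_onI dest: path_image_inj ideal_path)

text \<open>The projection is injective on supports, so a proper subrelation of the lift would
  project to a proper subrelation of the original.\<close>

lemma minimal_rel_lift:
  assumes "minimal_rel H I (fv y) (fv b) (kmap fa \<rho>)" "\<rho> \<in> J y b" "y \<in> verts G" "b \<in> verts G"
  shows "minimal_rel G J y b \<rho>"
  unfolding minimal_rel_def
proof (intro conjI allI impI)
  have inj: "inj_on (map fa) (supp \<rho>)" using assms(2) by (rule kmap_inj_on_ideal)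
  then have supp: "supp (kmap fa \<rho>) = map fa ` supp \<rho>" by (rule supp_kmap_inj_on)
  show "\<rho> \<in> J y b" by (fact assms(2))
  show "2 \<le> card (supp \<rho>)"
    using assms(1) card_image[OF inj] by (simp add: minimal_rel_def supp)
  fix S assume S: "S \<subseteq> supp \<rho>" "S \<noteq> {}" "S \<noteq> supp \<rho>"
  show "restrict_to \<rho> S \<notin> J y b"
  proof
    assume "restrict_to \<rho> S \<in> J y b"
    then have "kmap fa (restrict_to \<rho> S) \<in> I (fv y) (fv b)"
      by (rule kmap_in_ideal[OF assms(3,4)])
    moreover have "kmap fa (restrict_to \<rho> S) = restrict_to (kmap fa \<rho>) (map fa ` S)"
      using kmap_restrict_to_inj_on[OF inj] S(1) by (simp add: Int_absorb1)
    ultimately have "restrict_to (kmap fa \<rho>) (map fa ` S) \<in> I (fv y) (fv b)" by simp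
    moreover have "map fa ` S \<subseteq> supp (kmap fa \<rho>)" "map fa ` S \<noteq> {}"
      using S(1,2) supp by auto
    moreover have "map fa ` S \<noteq> supp (kmap fa \<rho>)"
      using S(3) inj_on_image_eq_iff[OF inj S(1) subset_refl] supp by simp
    ultimately show False
      using assms(1) unfolding minimal_rel_def by blast
  qed
qed

lemma relation_lift:
  assumes "is_path G y q z" "minimal_rel H I (fv y) z' \<rho>" "map fa q \<in> supp \<rho>" "p \<in> supp \<rho>"
  obtains q' where "basic_homot G J y (fwd_walk q) (fwd_walk q') z"
    "basic_homot G J y (fwd_walk q') (fwd_walk q) z" "map fa q' = p"
proof -
  have y: "y \<in> verts G" using is_path_verts[OF assms(1)] by simp
  have "\<forall>a\<in>verts G. fv a = fv y \<longrightarrow> (\<exists>b\<in>verts G. fv b = z' \<and> (\<exists>\<rho>'\<in>J a b. kmap fa \<rho>' = \<rho>))"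
    using covering_rel assms(2) unfolding covering_rel_def by blast
  then obtain b \<rho>' where b: "b \<in> verts G" "fv b = z'" and \<rho>': "\<rho>' \<in> J y b" "kmap fa \<rho>' = \<rho>"
    using y by blast
  have supp: "supp \<rho> = map fa ` supp \<rho>'"
    using supp_kmap_inj_on[OF kmap_inj_on_ideal[OF \<rho>'(1)]] \<rho>'(2) by simp
  obtain u where u: "u \<in> supp \<rho>'" "map fa u = map fa q" using assms(3) supp by auto
  have "u = q \<and> b = z" using path_image_inj[OF ideal_path[OF \<rho>'(1) u(1)] assms(1) u(2)] .
  then have q: "q \<in> supp \<rho>'" and "\<rho>' \<in> J y z" "fv z = z'" using u(1) \<rho>'(1) b(2) by simp_all
  then have "minimal_rel G J y z \<rho>'"
    using minimal_rel_lift[of y z \<rho>'] assms(2) \<rho>'(2) is_path_verts[OF assms(1)] by simp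
  moreover obtain q' where "q' \<in> supp \<rho>'" "map fa q' = p" using assms(4) supp by auto
  ultimately show thesis using q that unfolding basic_homot_def by blast
qed

lemma cancellation_lift:
  assumes "is_walk G y s z" "map_walk fa s = [(\<alpha>, d), (\<alpha>, \<not> d)]"
  shows "basic_homot G J y s [] z"
proof -
  obtain \<beta>1 \<beta>2 where s: "s = [(\<beta>1, d), (\<beta>2, \<not> d)]" and "fa \<beta>1 = fa \<beta>2"
    using assms(2) by (auto simp: map_eq_Cons_conv)
  have "\<beta>1 \<in> arrs G" "\<beta>2 \<in> arrs G" "if d then tgt G \<beta>2 = tgt G \<beta>1 else src G \<beta>2 = src G \<beta>1"
    using assms(1) s by (auto split: if_splits)
  moreover have "tgt G \<beta>1 \<in> verts G" "src G \<beta>1 \<in> verts G"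
    using wf \<open>\<beta>1 \<in> arrs G\<close> by (auto simp: wf_quiver_def)
  ultimately have "\<beta>1 = \<beta>2"
    using \<open>fa \<beta>1 = fa \<beta>2\<close> in_arr_inj out_arr_inj by (cases d) metis+
  then show ?thesis using assms(1) s unfolding basic_homot_def by (cases d) auto
qed

lemma cancellation_lift_rev:
  assumes "y \<in> verts G" "\<alpha> \<in> arrs H" "(if d then src H \<alpha> else tgt H \<alpha>) = fv y"
  obtains \<beta> where "basic_homot G J y [(\<beta>, d), (\<beta>, \<not> d)] [] y" "fa \<beta> = \<alpha>"
proof (cases d)
  case True
  then obtain \<beta> where "\<beta> \<in> arrs G" "src G \<beta> = y" "fa \<beta> = \<alpha>"
    using out_arr_lift assms by auto
  then show thesis using that True unfolding basic_homot_def by auto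
next
  case False
  then obtain \<beta> where "\<beta> \<in> arrs G" "tgt G \<beta> = y" "fa \<beta> = \<alpha>"
    using in_arr_lift assms by auto
  then show thesis using that False unfolding basic_homot_def by auto
qed

lemma basic_homot_lift:
  assumes "is_walk G y s z"
    and "basic_homot H I (fv y) (map_walk fa s) s'' z'' \<or> basic_homot H I (fv y) s'' (map_walk fa s) z''"
  obtains s' where "basic_homot G J y s s' z \<or> basic_homot G J y s' s z" "map_walk fa s' = s''"
proof -
  have y: "y \<in> verts G" using is_walk_verts[OF assms(1)] by simp
  from assms(2) show thesis
  proof (cases rule: basic_homot_cases)
    case cancel
    then show thesis using cancellation_lift[OF assms(1) cancel(3)] that[of "[]"] by simp
  next
    case (cancel_rev \<alpha> d)
    then have "s = []" "z = y" using assms(1) by simp_all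
    obtain \<beta> where "basic_homot G J y [(\<beta>, d), (\<beta>, \<not> d)] [] y" "fa \<beta> = \<alpha>"
      using cancellation_lift_rev[OF y cancel_rev(1,2)] .
    then show thesis
      using that[of "[(\<beta>, d), (\<beta>, \<not> d)]"] cancel_rev(3) \<open>s = []\<close> \<open>z = y\<close> by simp
  next
    case (relation \<rho> p p'')
    then have "s = fwd_walk (map fst s)" "map fa (map fst s) = p"
      using map_walk_eq_fwd_walkD by blast+
    moreover have "is_path G y (map fst s) z"
      using assms(1) calculation(1) is_walk_fwd_walk by metis
    ultimately obtain q' where "basic_homot G J y s (fwd_walk q') z" "basic_homot G J y (fwd_walk q') s z"
        "map fa q' = p''"
      using relation_lift relation(1-3) by metis
    moreover have "map_walk fa (fwd_walk q') = s''"
      unfolding map_walk_fwd_walk using calculation(3) relation(5) by simp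
    ultimately show thesis using that by blast
  qed
qed

lemma homot_step_lift:
  assumes "is_walk G x w e" "symclp (homot_step H I (fv x)) (map_walk fa w) W"
  obtains w' where "symclp (homot_step G J x) w w'" "map_walk fa w' = W"
proof -
  obtain u t s s'' y z'' e'' where h: "is_walk H (fv x) u y"
      "basic_homot H I y s s'' z'' \<or> basic_homot H I y s'' s z''"
      "map_walk fa w = u @ s @ t" "W = u @ s'' @ t"
    using assms(2) unfolding symclp_homot_step_iff by blast
  obtain wu ws wt where split: "w = wu @ ws @ wt" "map_walk fa wu = u" "map_walk fa ws = s"
      "map_walk fa wt = t"
    using h(3) by (rule map_walk_eq_append3)
  obtain y' z where walks: "is_walk G x wu y'" "is_walk G y' ws z" "is_walk G z wt e"
    using assms(1) unfolding split(1) is_walk_append by blast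
  have "fv y' = y" using walk_image[OF walks(1)] h(1) split(2) is_walk_walk_end by metis
  then obtain ws' where ws': "basic_homot G J y' ws ws' z \<or> basic_homot G J y' ws' ws z"
      "map_walk fa ws' = s''"
    using basic_homot_lift[OF walks(2)] h(2) split(3) by metis
  have "symclp (homot_step G J x) w (wu @ ws' @ wt)"
    unfolding symclp_homot_step_iff using walks ws'(1) split(1) by blast
  moreover have "map_walk fa (wu @ ws' @ wt) = W" using split ws'(2) h(4) by simp
  ultimately show thesis by (rule that)
qed

lemma homotopic_lift:
  assumes "is_walk G x w e" "homotopic H I (fv x) (map_walk fa w) W"
  obtains w' where "homotopic G J x w w'" "map_walk fa w' = W"
proof -
  from assms(2) have "\<exists>w'. homotopic G J x w w' \<and> map_walk fa w' = W"
    unfolding homotopic_eq_equivclp[of H]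
  proof (induction rule: equivclp_induct)
    case (step W1 W2)
    then obtain w1 where w1: "homotopic G J x w w1" "map_walk fa w1 = W1" by blast
    then have "is_walk G x w1 e" using assms(1) homotopic_walk_iff by blast
    then obtain w2 where "symclp (homot_step G J x) w1 w2" "map_walk fa w2 = W2"
      using homot_step_lift step(2) w1(2) unfolding symclp_def by metis
    then show ?case
      using w1(1) unfolding homotopic_eq_equivclp symclp_def by (blast intro: equivclp_into_equivclp)
  qed (intro exI[of _ w], simp)
  then show thesis using that by blast
qed

lemma homotopic_Nil_lift:
  assumes "is_walk G x w e" "homotopic H I (fv x) (map_walk fa w) []"
  shows "homotopic G J x w []"
  using homotopic_lift[OF assms] by force

end

section \<open>The homotopy cover\<close>

locale homotopy_cover = quiver_with_relations Q I
  for Q :: "('v, 'a) quiver" and I :: "'v \<Rightarrow> 'v \<Rightarrow> ('a list \<Rightarrow> 'k::field) set" +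
  fixes b :: 'v
  assumes connected: "connected_quiver Q" and base: "b \<in> verts Q"
begin

text \<open>The vertices of the cover are the homotopy classes of walks starting at \<open>b\<close>, each
  represented by a chosen member.\<close>

definition rep :: "('a \<times> bool) list \<Rightarrow> ('a \<times> bool) list" where
  "rep w = (SOME w'. homotopic Q I b w w')"

lemma rep_homotopic: "homotopic Q I b w (rep w)"
  unfolding rep_def by (rule someI[of _ w]) simp

lemma rep_eq_iff: "rep w = rep w' \<longleftrightarrow> homotopic Q I b w w'"
proof
  assume "homotopic Q I b w w'"
  then have "homotopic Q I b w = homotopic Q I b w'"
    by (auto intro: homotopic_trans homotopic_sym)
  then show "rep w = rep w'" unfolding rep_def by simp
qed (metis rep_homotopic homotopic_sym homotopic_trans)

lemma rep_rep: "rep (rep w) = rep w"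
  using rep_eq_iff rep_homotopic homotopic_sym by metis

lemma rep_walk: "is_walk Q b w e \<Longrightarrow> is_walk Q b (rep w) e"
  using homotopic_walk_iff[OF rep_homotopic] by blast

lemma walk_end_rep: "is_walk Q b w e \<Longrightarrow> walk_end Q b (rep w) = e"
  using rep_walk is_walk_walk_end by metis

lemma rep_append:
  assumes "is_walk Q b w e" "is_walk Q e t f"
  shows "rep (rep w @ t) = rep (w @ t)"
  using homotopic_append[OF homotopic_sym[OF rep_homotopic] rep_walk[OF assms(1)] assms(2)]
  by (simp add: rep_eq_iff)

definition cover_verts :: "('a \<times> bool) list set" where
  "cover_verts = {rep w | w. \<exists>e. is_walk Q b w e}"

lemma rep_in_cover_verts: "is_walk Q b w e \<Longrightarrow> rep w \<in> cover_verts"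
  unfolding cover_verts_def by blast

lemma cover_vertsD:
  assumes "v \<in> cover_verts"
  shows "is_walk Q b v (walk_end Q b v)" "rep v = v"
  using assms rep_walk is_walk_walk_end rep_rep unfolding cover_verts_def by fastforce+

lemma walk_end_cover_vert: "v \<in> cover_verts \<Longrightarrow> walk_end Q b v \<in> verts Q"
  using cover_vertsD(1) is_walk_verts by metis

lemma rep_Nil_in_cover_verts: "rep [] \<in> cover_verts" and walk_end_rep_Nil: "walk_end Q b (rep []) = b"
  using rep_in_cover_verts[of "[]" b] walk_end_rep[of "[]" b] base by simp_all

lemma cover_vert_extend:
  assumes "v \<in> cover_verts" "is_walk Q (walk_end Q b v) t e"
  shows "rep (v @ t) \<in> cover_verts" "walk_end Q b (rep (v @ t)) = e"
  using is_walk_appendI[OF cover_vertsD(1)[OF assms(1)] assms(2)]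
  by (simp_all add: rep_in_cover_verts walk_end_rep)

lemma rep_extend_append:
  assumes "v \<in> cover_verts" "is_walk Q (walk_end Q b v) t e" "is_walk Q e t' f"
  shows "rep (rep (v @ t) @ t') = rep (v @ t @ t')"
  using rep_append[OF is_walk_appendI[OF cover_vertsD(1)[OF assms(1)] assms(2)] assms(3)] by simp

lemma arr_walk_fwd: "\<alpha> \<in> arrs Q \<Longrightarrow> is_walk Q (src Q \<alpha>) [(\<alpha>, True)] (tgt Q \<alpha>)"
  using wf by (auto simp: wf_quiver_def)

lemma arr_walk_bwd: "\<alpha> \<in> arrs Q \<Longrightarrow> is_walk Q (tgt Q \<alpha>) [(\<alpha>, False)] (src Q \<alpha>)"
  using wf by (auto simp: wf_quiver_def)

lemma rep_cancel:
  assumes "v \<in> cover_verts" "\<alpha> \<in> arrs Q" "(if d then src Q \<alpha> else tgt Q \<alpha>) = walk_end Q b v"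
  shows "rep (v @ [(\<alpha>, d), (\<alpha>, \<not> d)]) = v"
proof -
  have "homot_step Q I b (v @ [(\<alpha>, d), (\<alpha>, \<not> d)]) v"
    using homot_step_cancel[OF cover_vertsD(1)[OF assms(1)] assms(2,3), of "[]" "walk_end Q b v"]
      walk_end_cover_vert[OF assms(1)] by simp
  then show ?thesis
    using cover_vertsD(2)[OF assms(1)] rep_eq_iff homot_step_homotopic by metis
qed

definition cover :: "(('a \<times> bool) list, ('a \<times> bool) list \<times> 'a) quiver" where
  "cover = \<lparr>verts = cover_verts,
            arrs = {(v, \<alpha>). v \<in> cover_verts \<and> \<alpha> \<in> arrs Q \<and> src Q \<alpha> = walk_end Q b v},
            src = fst, tgt = (\<lambda>(v, \<alpha>). rep (v @ [(\<alpha>, True)]))\<rparr>"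

lemma cover_simps [simp]:
  "verts cover = cover_verts"
  "arrs cover = {(v, \<alpha>). v \<in> cover_verts \<and> \<alpha> \<in> arrs Q \<and> src Q \<alpha> = walk_end Q b v}"
  "src cover = fst" "tgt cover (v, \<alpha>) = rep (v @ [(\<alpha>, True)])"
  by (simp_all add: cover_def)

lemma cover_arr_tgt:
  assumes "(v, \<alpha>) \<in> arrs cover"
  shows "rep (v @ [(\<alpha>, True)]) \<in> cover_verts" "walk_end Q b (rep (v @ [(\<alpha>, True)])) = tgt Q \<alpha>"
  using cover_vert_extend[of v "[(\<alpha>, True)]"] arr_walk_fwd[of \<alpha>] assms by auto

lemma wf_cover: "wf_quiver cover"
  using cover_arr_tgt by (auto simp: wf_quiver_def)

lemma cover_arr_tgt_iff:
  assumes "x \<in> cover_verts" "(u, \<alpha>) \<in> arrs cover"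
  shows "tgt cover (u, \<alpha>) = x \<longleftrightarrow> u = rep (x @ [(\<alpha>, False)]) \<and> tgt Q \<alpha> = walk_end Q b x"
proof
  assume x: "tgt cover (u, \<alpha>) = x"
  have u: "u \<in> cover_verts" "\<alpha> \<in> arrs Q" "src Q \<alpha> = walk_end Q b u" using assms(2) by auto
  have step: "is_walk Q (walk_end Q b u) [(\<alpha>, True)] (tgt Q \<alpha>)"
    using arr_walk_fwd[OF u(2)] u(3) by simp
  have "rep (x @ [(\<alpha>, False)]) = rep (u @ [(\<alpha>, True), (\<alpha>, False)])"
    using rep_extend_append[OF u(1) step arr_walk_bwd[OF u(2)]] x by simp
  then show "u = rep (x @ [(\<alpha>, False)]) \<and> tgt Q \<alpha> = walk_end Q b x"
    using rep_cancel[OF u(1,2), of True] u(3) x cover_arr_tgt[OF assms(2)] by simp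
next
  assume u: "u = rep (x @ [(\<alpha>, False)]) \<and> tgt Q \<alpha> = walk_end Q b x"
  have \<alpha>: "\<alpha> \<in> arrs Q" using assms(2) by simp
  have step: "is_walk Q (walk_end Q b x) [(\<alpha>, False)] (src Q \<alpha>)"
    using arr_walk_bwd[OF \<alpha>] u by simp
  have "rep (u @ [(\<alpha>, True)]) = rep (x @ [(\<alpha>, False), (\<alpha>, True)])"
    using rep_extend_append[OF assms(1) step arr_walk_fwd[OF \<alpha>]] u by simp
  then show "tgt cover (u, \<alpha>) = x" using rep_cancel[OF assms(1) \<alpha>, of False] u by simp
qed

lemma covering_quiver_cover: "covering_quiver cover Q (walk_end Q b) snd"
  unfolding covering_quiver_def
proof (intro conjI ballI)
  fix x assume x: "x \<in> verts cover"
  show "bij_betw snd {\<alpha> \<in> arrs cover. src cover \<alpha> = x} {\<beta> \<in> arrs Q. src Q \<beta> = walk_end Q b x}"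
    using x by (auto intro!: bij_betw_imageI inj_onI simp: image_iff)
  have "snd ` {\<alpha> \<in> arrs cover. tgt cover \<alpha> = x} = {\<beta> \<in> arrs Q. tgt Q \<beta> = walk_end Q b x}"
  proof (intro Set.set_eqI iffI)
    fix \<beta> assume \<beta>: "\<beta> \<in> {\<beta> \<in> arrs Q. tgt Q \<beta> = walk_end Q b x}"
    let ?u = "rep (x @ [(\<beta>, False)])"
    have "?u \<in> cover_verts" "walk_end Q b ?u = src Q \<beta>"
      using cover_vert_extend[of x "[(\<beta>, False)]"] arr_walk_bwd[of \<beta>] x \<beta> by auto
    then have "(?u, \<beta>) \<in> {\<alpha> \<in> arrs cover. tgt cover \<alpha> = x}"
      using cover_arr_tgt_iff[of x ?u \<beta>] x \<beta> by auto
    then show "\<beta> \<in> snd ` {\<alpha> \<in> arrs cover. tgt cover \<alpha> = x}" by force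
  qed (use cover_arr_tgt(2) in fastforce)
  moreover have "inj_on snd {\<alpha> \<in> arrs cover. tgt cover \<alpha> = x}"
  proof -
    have "(rep (x @ [(snd a, False)]), snd a) = a" if "a \<in> arrs cover" "tgt cover a = x" for a
      using that x cover_arr_tgt_iff[of x "fst a" "snd a"] by (simp add: prod_eq_iff)
    then show ?thesis by (intro inj_on_inverseI[where g = "\<lambda>\<beta>. (rep (x @ [(\<beta>, False)]), \<beta>)"]) auto
  qed
  ultimately show "bij_betw snd {\<alpha> \<in> arrs cover. tgt cover \<alpha> = x} {\<beta> \<in> arrs Q. tgt Q \<beta> = walk_end Q b x}"
    by (simp add: bij_betw_def)
qed (auto simp: walk_end_cover_vert cover_arr_tgt)

sublocale proj: quiver_covering cover Q "walk_end Q b" snd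
  by unfold_locales (fact covering_quiver_cover)

fun lift_walk :: "('a \<times> bool) list \<Rightarrow> ('a \<times> bool) list \<Rightarrow> ((('a \<times> bool) list \<times> 'a) \<times> bool) list" where
  "lift_walk v [] = []"
| "lift_walk v ((\<alpha>, d) # w) =
     ((if d then v else rep (v @ [(\<alpha>, False)]), \<alpha>), d) # lift_walk (rep (v @ [(\<alpha>, d)])) w"

lemma map_walk_lift_walk: "map_walk snd (lift_walk v w) = w"
  by (induction v w rule: lift_walk.induct) auto

lemma walk_lift:
  assumes "v \<in> cover_verts" "is_walk Q (walk_end Q b v) w e"
  shows "is_walk cover v (lift_walk v w) (rep (v @ w))"
  using assms
proof (induction w arbitrary: v)
  case Nil
  then show ?case using cover_vertsD(2) by simp
next
  case (Cons \<alpha>d w)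
  obtain \<alpha> d where \<alpha>d: "\<alpha>d = (\<alpha>, d)" by fastforce
  let ?v' = "rep (v @ [(\<alpha>, d)])" and ?c = "if d then tgt Q \<alpha> else src Q \<alpha>"
  have \<alpha>: "\<alpha> \<in> arrs Q" "(if d then src Q \<alpha> else tgt Q \<alpha>) = walk_end Q b v" and w: "is_walk Q ?c w e"
    using Cons.prems(2) \<alpha>d by (auto split: if_splits)
  have step: "is_walk Q (walk_end Q b v) [(\<alpha>, d)] ?c"
    using \<alpha> arr_walk_fwd arr_walk_bwd walk_end_cover_vert[OF Cons.prems(1)] by (cases d) auto
  have v': "?v' \<in> cover_verts" "walk_end Q b ?v' = ?c"
    using cover_vert_extend[OF Cons.prems(1) step] by simp_all
  have "rep (?v' @ w) = rep (v @ \<alpha>d # w)"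
    using rep_extend_append[OF Cons.prems(1) step w] \<alpha>d by simp
  moreover have "is_walk cover ?v' (lift_walk ?v' w) (rep (?v' @ w))"
    using Cons.IH v' w by simp
  moreover have "tgt cover (?v', \<alpha>) = v" if "\<not> d"
    using cover_arr_tgt_iff[OF Cons.prems(1), of ?v' \<alpha>] v' \<alpha> that by simp
  ultimately show ?case using Cons.prems(1) v' \<alpha> \<alpha>d by (cases d) auto
qed

lemma connected_cover: "connected_quiver cover"
proof -
  have from_base: "is_walk cover (rep []) (lift_walk (rep []) v) v" if "v \<in> cover_verts" for v
  proof -
    have "rep (rep [] @ v) = rep v"
      using rep_append[of "[]" b] cover_vertsD(1)[OF that] base by simp
    then show ?thesis
      using walk_lift[OF rep_Nil_in_cover_verts, of v] cover_vertsD[OF that] walk_end_rep_Nil by simp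
  qed
  show ?thesis
    unfolding connected_quiver_def
  proof (intro conjI ballI)
    fix x y assume "x \<in> verts cover" "y \<in> verts cover"
    then have "is_walk cover x (rev_walk (lift_walk (rep []) x) @ lift_walk (rep []) y) y"
      using is_walk_appendI[OF is_walk_rev_walk[OF wf_cover from_base[of x]] from_base[of y]] by simp
    then show "\<exists>w. is_walk cover x w y" ..
  qed (use rep_Nil_in_cover_verts in auto)
qed

lemma cover_walk_end:
  assumes "v \<in> cover_verts" "is_walk cover v W y"
  shows "y = rep (v @ map_walk snd W)"
proof -
  have "is_walk Q (walk_end Q b v) (map_walk snd W) (walk_end Q b y)"
    using proj.walk_image[OF assms(2)] .
  then have "is_walk cover v (lift_walk v (map_walk snd W)) (rep (v @ map_walk snd W))"
    by (rule walk_lift[OF assms(1)])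
  moreover from this have "lift_walk v (map_walk snd W) = W"
    using proj.walk_image_inj assms(2) map_walk_lift_walk by blast
  ultimately show ?thesis using assms(2) is_walk_walk_end by metis
qed

definition cover_ideal ::
  "('a \<times> bool) list \<Rightarrow> ('a \<times> bool) list \<Rightarrow> ((('a \<times> bool) list \<times> 'a) list \<Rightarrow> 'k) set" where
  "cover_ideal x y = {f \<in> kQ cover x y. kmap snd f \<in> I (walk_end Q b x) (walk_end Q b y)}"

lemma quiver_ideal_cover: "quiver_ideal cover cover_ideal"
  unfolding quiver_ideal_def
proof (intro conjI allI impI)
  fix x y f g assume "f \<in> cover_ideal x y" "g \<in> cover_ideal x y"
  moreover from this have "kmap snd (\<lambda>u. f u + g u) = (\<lambda>u. kmap snd f u + kmap snd g u)"
    by (intro kmap_add) (simp_all add: cover_ideal_def kQ_def)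
  ultimately show "(\<lambda>u. f u + g u) \<in> cover_ideal x y"
    by (simp add: cover_ideal_def kQ_add ideal_add)
next
  fix x y z f q assume "f \<in> cover_ideal x y" "is_path cover y q z"
  then show "rmul f q \<in> cover_ideal x z"
    by (auto simp: cover_ideal_def kQ_rmul kmap_rmul ideal_rmul proj.path_image)
next
  fix w x y f q assume "f \<in> cover_ideal x y" "is_path cover w q x"
  then show "lmul q f \<in> cover_ideal w y"
    by (auto simp: cover_ideal_def kQ_lmul kmap_lmul ideal_lmul proj.path_image)
next
  fix x f assume "f \<in> cover_ideal x x"
  then have "kmap snd f [] = 0" by (intro ideal_Nil[of _ "walk_end Q b x"]) (simp add: cover_ideal_def)
  then show "f [] = 0" by (simp add: kmap_Nil)
qed (auto simp: cover_ideal_def kQ_zero kmap_zero ideal_zero kQ_smult kmap_smult ideal_smult)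

lemma cover_path_end:
  "v \<in> cover_verts \<Longrightarrow> is_path cover v q y \<Longrightarrow> y = rep (v @ fwd_walk (map snd q))"
  using cover_walk_end[of v "fwd_walk q" y] unfolding is_walk_fwd_walk map_walk_fwd_walk .

lemma path_lift:
  assumes "v \<in> cover_verts" "is_path Q (walk_end Q b v) p e"
  obtains q where "is_path cover v q (rep (v @ fwd_walk p))" "map snd q = p"
proof
  let ?W = "lift_walk v (fwd_walk p)"
  have fwd: "?W = fwd_walk (map fst ?W)" and snd: "map snd (map fst ?W) = p"
    using map_walk_eq_fwd_walkD[OF map_walk_lift_walk] by blast+
  have "is_walk Q (walk_end Q b v) (fwd_walk p) e" using assms(2) by (simp only: is_walk_fwd_walk)
  then have "is_walk cover v ?W (rep (v @ fwd_walk p))" by (rule walk_lift[OF assms(1)])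
  then show "is_path cover v (map fst ?W) (rep (v @ fwd_walk p))"
    by (subst (asm) fwd) (simp only: is_walk_fwd_walk)
  show "map snd (map fst ?W) = p" by (fact snd)
qed

definition lift_comb ::
  "('a \<times> bool) list \<Rightarrow> ('a \<times> bool) list \<Rightarrow> ('a list \<Rightarrow> 'k) \<Rightarrow> ((('a \<times> bool) list \<times> 'a) list \<Rightarrow> 'k)" where
  "lift_comb v y f = (\<lambda>q. if is_path cover v q y then f (map snd q) else 0)"

lemma supp_lift_comb: "supp (lift_comb v y f) = {q. is_path cover v q y \<and> map snd q \<in> supp f}"
  by (auto simp: lift_comb_def supp_def)

lemma inj_on_supp_lift_comb: "inj_on (map snd) (supp (lift_comb v y f))"
  by (auto simp: supp_lift_comb intro!: inj_onI dest: proj.path_image_inj)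

lemma lift_comb_kQ:
  assumes "finite (supp f)"
  shows "lift_comb v y f \<in> kQ cover v y"
proof -
  have "map snd ` supp (lift_comb v y f) \<subseteq> supp f" by (auto simp: supp_lift_comb)
  then have "finite (supp (lift_comb v y f))"
    using inj_on_finite[OF inj_on_supp_lift_comb] assms by blast
  then show ?thesis by (simp add: kQ_def supp_lift_comb)
qed

lemma kmap_lift_comb:
  assumes "v \<in> cover_verts" "f \<in> kQ Q (walk_end Q b v) e"
  shows "kmap snd (lift_comb v y f) = restrict_to f {p. rep (v @ fwd_walk p) = y}"
proof
  fix p
  show "kmap snd (lift_comb v y f) p = restrict_to f {p. rep (v @ fwd_walk p) = y} p"
  proof (cases "p \<in> supp f \<and> rep (v @ fwd_walk p) = y")
    case True
    then have "is_path Q (walk_end Q b v) p e" using assms(2) by (simp add: kQ_def)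
    then obtain q where q: "is_path cover v q y" "map snd q = p"
      using path_lift[OF assms(1)] True by metis
    then have "q \<in> supp (lift_comb v y f)" using True by (simp add: supp_lift_comb)
    then have "kmap snd (lift_comb v y f) p = lift_comb v y f q"
      using kmap_inj_on[OF inj_on_supp_lift_comb] q(2) by metis
    then show ?thesis using q True by (simp add: lift_comb_def restrict_to_def)
  next
    case False
    then have "p \<notin> map snd ` supp (lift_comb v y f)"
      using cover_path_end[OF assms(1)] by (auto simp: supp_lift_comb)
    then show ?thesis using False kmap_eq_0 by (auto simp: restrict_to_def supp_def)
  qed
qed

lemma minimal_rel_same_class:
  assumes "v \<in> cover_verts" "minimal_rel Q I (walk_end Q b v) e \<rho>" "p \<in> supp \<rho>" "p' \<in> supp \<rho>"
  shows "rep (v @ fwd_walk p) = rep (v @ fwd_walk p')"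
proof -
  have path: "is_path Q (walk_end Q b v) p e"
    using assms(2,3) ideal_path by (auto simp: minimal_rel_def)
  have "homotopic Q I (walk_end Q b v) (fwd_walk p) (fwd_walk p')"
    using homotopic_relation[OF assms(2-4)] is_path_verts[OF path] by simp
  then have "homotopic Q I b (v @ fwd_walk p) (v @ fwd_walk p')"
    by (rule homotopic_prepend[OF _ cover_vertsD(1)[OF assms(1)]])
  then show ?thesis by (simp add: rep_eq_iff)
qed

lemma lift_comb_in_cover_ideal:
  assumes "v \<in> cover_verts" "f \<in> I (walk_end Q b v) e" "walk_end Q b y = e"
  shows "lift_comb v y f \<in> cover_ideal v y"
proof -
  have "restrict_to f {p. rep (v @ fwd_walk p) = y} \<in> I (walk_end Q b v) e"
  proof (rule restrict_to_in_ideal[OF assms(2)])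
    fix \<rho> assume "minimal_rel Q I (walk_end Q b v) e \<rho>"
    then show "supp \<rho> \<subseteq> {p. rep (v @ fwd_walk p) = y} \<or> supp \<rho> \<inter> {p. rep (v @ fwd_walk p) = y} = {}"
      using minimal_rel_same_class[OF assms(1)] by blast
  qed
  moreover have "kmap snd (lift_comb v y f) = restrict_to f {p. rep (v @ fwd_walk p) = y}"
    by (rule kmap_lift_comb[OF assms(1) ideal_kQ[OF assms(2)]])
  ultimately show ?thesis
    using assms(2,3) lift_comb_kQ[OF ideal_finite] by (simp add: cover_ideal_def)
qed

lemma relation_lift_to_cover:
  assumes "v \<in> cover_verts" "\<rho> \<in> I (walk_end Q b v) e" "p0 \<in> supp \<rho>"
    and "\<And>p. p \<in> supp \<rho> \<Longrightarrow> rep (v @ fwd_walk p) = y"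
  shows "y \<in> verts cover" "walk_end Q b y = e" "lift_comb v y \<rho> \<in> cover_ideal v y"
    "kmap snd (lift_comb v y \<rho>) = \<rho>"
proof -
  have "is_walk Q (walk_end Q b v) (fwd_walk p0) e"
    using ideal_path[OF assms(2,3)] by (simp add: is_walk_fwd_walk)
  then show "y \<in> verts cover" "walk_end Q b y = e"
    using cover_vert_extend[OF assms(1)] assms(4)[OF assms(3)] by auto
  then show "lift_comb v y \<rho> \<in> cover_ideal v y"
    by (intro lift_comb_in_cover_ideal[OF assms(1,2)])
  show "kmap snd (lift_comb v y \<rho>) = \<rho>"
    using kmap_lift_comb[OF assms(1) ideal_kQ[OF assms(2)]] assms(4)
    by (simp add: restrict_to_supp_subset subsetI)
qed

lemma ideal_decomposition:
  assumes "f \<in> I a e"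
  shows "f \<in> fsums (\<Union>{kmap snd ` cover_ideal x y | x y.
    x \<in> verts cover \<and> y \<in> verts cover \<and> walk_end Q b x = a \<and> walk_end Q b y = e})"
    (is "f \<in> fsums ?U")
proof (cases "supp f = {}")
  case True
  then show ?thesis by (simp add: supp_empty_iff fsums.zero)
next
  case False
  then obtain p where "p \<in> supp f" by blast
  then have "a \<in> verts Q" using is_path_verts[OF ideal_path[OF assms]] by simp
  then obtain w where "is_walk Q b w a" using connected base unfolding connected_quiver_def by blast
  then have x: "rep w \<in> cover_verts" "walk_end Q b (rep w) = a"
    by (simp_all add: rep_in_cover_verts walk_end_rep)
  let ?class = "\<lambda>p. rep (rep w @ fwd_walk p)"
  have "kmap snd (lift_comb (rep w) y f) \<in> ?U" if y: "y \<in> ?class ` supp f" for y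
  proof -
    obtain p where p: "p \<in> supp f" "y = ?class p" using y by blast
    then have "is_walk Q (walk_end Q b (rep w)) (fwd_walk p) e"
      using ideal_path[OF assms] x(2) by (simp add: is_walk_fwd_walk)
    then have "y \<in> verts cover" "walk_end Q b y = e"
      using cover_vert_extend[OF x(1)] p(2) by simp_all
    moreover have "lift_comb (rep w) y f \<in> cover_ideal (rep w) y"
      using lift_comb_in_cover_ideal[OF x(1)] assms x(2) calculation(2) by simp
    ultimately show ?thesis
      using x by (intro UnionI[of "kmap snd ` cover_ideal (rep w) y"]) auto
  qed
  then have "(\<lambda>u. \<Sum>y\<in>?class ` supp f. kmap snd (lift_comb (rep w) y f) u) \<in> fsums ?U"
    using ideal_finite[OF assms] by (intro fsums_sum) auto
  moreover have "kmap snd (lift_comb (rep w) y f) = restrict_to f {p. ?class p = y}" for y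
    using kmap_lift_comb[OF x(1)] ideal_kQ[OF assms] x(2) by simp
  ultimately show ?thesis
    using sum_restrict_to_fibres[OF ideal_finite[OF assms], of ?class] by simp
qed

lemma relation_same_class:
  assumes "minimal_rel Q I a e \<rho> \<or> zero_rel Q I a e \<rho>" "x \<in> cover_verts" "walk_end Q b x = a"
    "p \<in> supp \<rho>" "p' \<in> supp \<rho>"
  shows "rep (x @ fwd_walk p) = rep (x @ fwd_walk p')"
  using assms(1)
proof
  assume "zero_rel Q I a e \<rho>"
  then have "card (supp \<rho>) = 1" by (simp add: zero_rel_def)
  then obtain q where "supp \<rho> = {q}" by (rule card_1_singletonE)
  then show ?thesis using assms(4,5) by simp
qed (use minimal_rel_same_class[OF assms(2)] assms(3-5) in blast)

lemma path_lift_rev: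
  assumes "y \<in> cover_verts" "is_path Q a p (walk_end Q b y)"
  obtains x where "x \<in> cover_verts" "walk_end Q b x = a" "rep (x @ fwd_walk p) = y"
proof
  have p: "is_walk Q a (fwd_walk p) (walk_end Q b y)"
    using assms(2) by (simp add: is_walk_fwd_walk)
  have return: "is_walk Q (walk_end Q b y) (rev_walk (fwd_walk p)) a"
    by (rule is_walk_rev_walk[OF wf p])
  let ?x = "rep (y @ rev_walk (fwd_walk p))"
  show "?x \<in> cover_verts" "walk_end Q b ?x = a"
    using cover_vert_extend[OF assms(1) return] by simp_all
  have "homotopic Q I b (y @ rev_walk (fwd_walk p) @ fwd_walk p) y"
    by (rule homotopic_cancel_rev_walk[OF cover_vertsD(1)[OF assms(1)] p])
  then have "rep (y @ rev_walk (fwd_walk p) @ fwd_walk p) = rep y" by (simp add: rep_eq_iff)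
  then have "rep (y @ rev_walk (fwd_walk p) @ fwd_walk p) = y"
    using cover_vertsD(2)[OF assms(1)] by simp
  then show "rep (?x @ fwd_walk p) = y"
    using rep_extend_append[OF assms(1) return p] by simp
qed

lemma covering_rel_cover: "covering_rel cover cover_ideal Q I (walk_end Q b) snd"
  unfolding covering_rel_def
proof (intro conjI allI impI)
  fix a e
  show "I a e = fsums (\<Union>{kmap snd ` cover_ideal x y | x y.
    x \<in> verts cover \<and> y \<in> verts cover \<and> walk_end Q b x = a \<and> walk_end Q b y = e})"
  proof
    show "fsums (\<Union>{kmap snd ` cover_ideal x y | x y.
      x \<in> verts cover \<and> y \<in> verts cover \<and> walk_end Q b x = a \<and> walk_end Q b y = e}) \<subseteq> I a e"
      by (rule fsums_subset_ideal) (auto simp: cover_ideal_def)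
  qed (use ideal_decomposition in blast)
next
  fix a e \<rho> assume rel: "minimal_rel Q I a e \<rho> \<or> zero_rel Q I a e \<rho>"
  then have \<rho>: "\<rho> \<in> I a e" and "supp \<rho> \<noteq> {}"
    by (auto simp: minimal_rel_def zero_rel_def)
  then obtain p0 where p0: "p0 \<in> supp \<rho>" by blast
  have lift: "\<exists>\<rho>'\<in>cover_ideal x (rep (x @ fwd_walk p0)). kmap snd \<rho>' = \<rho>"
    "rep (x @ fwd_walk p0) \<in> verts cover" "walk_end Q b (rep (x @ fwd_walk p0)) = e"
    if "x \<in> cover_verts" "walk_end Q b x = a" for x
    using relation_lift_to_cover[OF that(1) \<rho>[folded that(2)] p0]
      relation_same_class[OF rel that _ p0] by blast+
  show "\<forall>x\<in>verts cover. walk_end Q b x = a \<longrightarrow>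
      (\<exists>y\<in>verts cover. walk_end Q b y = e \<and> (\<exists>\<rho>'\<in>cover_ideal x y. kmap snd \<rho>' = \<rho>))"
  proof (intro ballI impI)
    fix x assume "x \<in> verts cover" "walk_end Q b x = a"
    then show "\<exists>y\<in>verts cover. walk_end Q b y = e \<and> (\<exists>\<rho>'\<in>cover_ideal x y. kmap snd \<rho>' = \<rho>)"
      using lift[of x] by auto
  qed
  show "\<forall>y\<in>verts cover. walk_end Q b y = e \<longrightarrow>
      (\<exists>x\<in>verts cover. walk_end Q b x = a \<and> (\<exists>\<rho>'\<in>cover_ideal x y. kmap snd \<rho>' = \<rho>))"
  proof (intro ballI impI)
    fix y assume "y \<in> verts cover" "walk_end Q b y = e"
    then obtain x where "x \<in> cover_verts" "walk_end Q b x = a" "rep (x @ fwd_walk p0) = y"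
      using path_lift_rev[of y a p0] ideal_path[OF \<rho> p0] by auto
    then show "\<exists>x\<in>verts cover. walk_end Q b x = a \<and> (\<exists>\<rho>'\<in>cover_ideal x y. kmap snd \<rho>' = \<rho>)"
      using lift by auto
  qed
qed (fact covering_quiver_cover)

lemma closed_cover_walk_homotopic_Nil:
  assumes "is_walk cover (rep []) W (rep [])"
  shows "homotopic Q I b (map_walk snd W) []"
proof -
  have walk: "is_walk Q b (map_walk snd W) b"
    using proj.walk_image[OF assms] walk_end_rep_Nil by simp
  have "rep [] = rep (rep [] @ map_walk snd W)"
    using cover_walk_end[OF rep_Nil_in_cover_verts assms] .
  also have "\<dots> = rep (map_walk snd W)"
    using rep_append[of "[]" b] walk base by simp
  finally show ?thesis by (simp add: rep_eq_iff homotopic_sym)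
qed

lemma universal_cover_to_cover:
  assumes "universal_cover R J Q I \<pi>v \<pi>a" "x0 \<in> verts R" "\<pi>v x0 = b"
  obtains gv ga where "covering_quiver R cover gv ga" "\<forall>\<alpha>\<in>arrs R. snd (ga \<alpha>) = \<pi>a \<alpha>" "gv x0 = rep []"
proof -
  have "wf_quiver cover \<and> quiver_ideal cover cover_ideal \<and> connected_quiver cover \<and>
      covering_rel cover cover_ideal Q I (walk_end Q b) snd \<and>
      x0 \<in> verts R \<and> rep [] \<in> verts cover \<and> \<pi>v x0 = walk_end Q b (rep [])"
    using wf_cover quiver_ideal_cover connected_cover covering_rel_cover assms(2,3)
      rep_Nil_in_cover_verts walk_end_rep_Nil by simp
  then obtain gv ga where "covering_rel R J cover cover_ideal gv ga"
      "\<forall>\<alpha>\<in>arrs R. snd (ga \<alpha>) = \<pi>a \<alpha>" "gv x0 = rep []"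
    using assms(1) unfolding universal_cover_def by metis
  moreover from this(1) have "covering_quiver R cover gv ga" by (simp add: covering_rel_def)
  ultimately show thesis using that by blast
qed

end

theorem corollary1p17:
  fixes Q :: "('qv, 'qa) quiver" and I :: "'qv \<Rightarrow> 'qv \<Rightarrow> ('qa list \<Rightarrow> 'k::field) set"
    and R :: "('rv, 'ra) quiver" and J :: "'rv \<Rightarrow> 'rv \<Rightarrow> ('ra list \<Rightarrow> 'k) set"
    and \<pi>v :: "'rv \<Rightarrow> 'qv" and \<pi>a :: "'ra \<Rightarrow> 'qa" and x0 :: 'rv
  assumes "alg_closed TYPE('k)"
    and "wf_quiver Q" and "quiver_ideal Q I" and "connected_quiver Q"
    and "wf_quiver R" and "quiver_ideal R J" and "connected_quiver R"
    and "universal_cover R J Q I \<pi>v \<pi>a"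
    and "x0 \<in> verts R"
  shows "carrier (fundamental_group R J x0) = {\<one>\<^bsub>fundamental_group R J x0\<^esub>}"
proof (rule fundamental_group_trivialI[OF assms(9)])
  interpret R: relations_covering R J Q I \<pi>v \<pi>a
    using assms(5,6,8) by unfold_locales (simp_all add: universal_cover_def)
  interpret cover: homotopy_cover Q I "\<pi>v x0"
    using assms(2-4) R.vert_image[OF assms(9)] by unfold_locales
  obtain gv ga where g: "covering_quiver R cover.cover gv ga" "\<forall>\<alpha>\<in>arrs R. snd (ga \<alpha>) = \<pi>a \<alpha>"
      "gv x0 = cover.rep []"
    using cover.universal_cover_to_cover[OF assms(8,9) refl] .
  fix w assume w: "is_walk R x0 w x0"
  then have "is_walk cover.cover (cover.rep []) (map_walk ga w) (cover.rep [])"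
    using quiver_covering.walk_image[OF quiver_covering.intro[OF g(1)]] g(3) by fastforce
  moreover have "map_walk snd (map_walk ga w) = map_walk \<pi>a w"
    using g(2) is_walk_arrs[OF w] by auto
  ultimately have "homotopic Q I (\<pi>v x0) (map_walk \<pi>a w) []"
    using cover.closed_cover_walk_homotopic_Nil by metis
  then show "homotopic R J x0 w []" by (rule R.homotopic_Nil_lift[OF w])
qed

end
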